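(* Let $n\ge2$, $0<r<n$, and $E_1>E_2>\dots>E_n>0$ (assumption A1), and assume (A2): $E_bS_{a,b}\notin\mathbb{Z}$ for all $a\in[1:r]$, $b\in[r+1:n]$. Using good triplets, define for $(a,c)\in[0:r-1]\times[r+1:n]$: $h(a,c)=\max\{b\in[r+1:n]:(a,b,c)\text{ good}\}$ (with $h(a,c)=r$ if no such $b$); for $(a,b)\in[0:r-1]\times[r+1:n]$: $e(a,b)=\min\{c\in[r+1:n]:(a,b,c)\text{ good}\}$ (with $e(a,b)=n+1$ if none); for $(b,c)\in[r+1:n]^2$: $g(b,c)=\min\{a\in[0:r-1]:(a,b,c)\text{ good}\}$ (with $g(b,c)=r$ if none). Let $\mathcal{X}_1=\{(a,c)\in[0:r-1]\times[r+1:n]: h(a,c)>r\}$, $\mathcal{X}_2=\{(a,b)\in[0:r-1]\times[r+1:n]: b<e(a,b)\le n\}$, $\mathcal{X}_3=\{(b,c)\in[r+1:n]^2: b\le c,\ 0<g(b,c)\le r-1\}$. Define: - for $(a,c)\in\mathcal{X}_1$, with $b=\min\{h(a,c),c\}$ and $\delta=r-a+b-c$: $p^{1,a,c}_k=1$ for $1\le k\le a$; $=\frac{\delta}{E_kS_{a+1,b}}$ for $a+1\le k\le b$; $=1$ for $b+1\le k\le c$; $=0$ otherwise; and $\gamma^{1,a,c}=\delta/S_{a+1,b}$; - for $(a,b)\in\mathcal{X}_2$, with $c=e(a,b)$: $p^{2,a,b}_k=1$ for $1\le k\le a$; $=E_b/E_k$ for $a+1\le k\le b$; $=1$ for $b+1\le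 k\le c-1$; $=r-a+b-c-E_bS_{a+1,b-1}$ for $k=c$; $=0$ otherwise; and $\gamma^{2,a,b}=E_b$; - for $(b,c)\in\mathcal{X}_3$, with $a=g(b,c)$: $p^{3,b,c}_k=1$ for $1\le k\le a-1$; $=r-a+b-c-E_bS_{a+1,b-1}$ for $k=a$; $=E_b/E_k$ for $a+1\le k\le b$; $=1$ for $b+1\le k\le c$; $=0$ otherwise; and $\gamma^{3,b,c}=E_b$; - $p^0_k=1$ for $k\le r$, $p^0_k=0$ otherwise, and $\gamma^0=E_{r+1}$. Then: (1) all vectors $\mathbf{p}^{1,a,c}$ ($(a,c)\in\mathcal{X}_1$), $\mathbf{p}^{2,a,b}$ ($(a,b)\in\mathcal{X}_2$), $\mathbf{p}^{3,b,c}$ ($(b,c)\in\mathcal{X}_3$) belong to $\mathcal{I}$; (2) each of these vectors together with its $\gamma$, as well as $(\mathbf{p}^0,\gamma^0)$, is feasible for (P-$\{1,\dots,r\}$); (3) an element of $\mathcal{A}=\{\mathbf{p}^0\}\cup\{\mathbf{p}^{1,a,c}\}_{\mathcal{X}_1}\cup\{\mathbf{p}^{2,a,b}\}_{\mathcal{X}_2}\cup\{\mathbf{p}^{3,b,c}\}_{\mathcal{X}_3}$ maximizing the objective $\sum_{j=1}^np_jE_j-\frac12\sum_{j=1}^rp_jE_j$, together with its associated $\gamma$, is an optimal solution of (P-$\{1,\dots,r\}$).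
   Context: $\mathcal{I}=\{\mathbf{p}\in[0,1]^n:\sum_kp_k=r\}$. For $1\le a,b\le n$, $S_{a,b}=\sum_{i=a}^b\frac1{E_i}$ if $b\ge a$ and $0$ otherwise. A triplet $(a,b,c)\in[0:r-1]\times[r+1:n]\times[r+1:n]$ is good if $r-a+b-c<E_bS_{a+1,b}$. (P-$\{1,\dots,r\}$) is the linear program $\max_{\mathbf{p}\in\mathcal{I},\gamma\in\mathbb{R}}\sum_{j=1}^np_jE_j-\frac12\sum_{j=1}^rp_jE_j$ subject to $p_jE_j\ge\gamma$ for $1\le j\le r$ and $\gamma\ge p_tE_t$ for $r<t\le n$. $[x:y]$ denotes the integers from $x$ to $y$ inclusive. *)

theory Defs
  imports Complex_Main
begin

text \<open>Vectors in R^n are functions nat => real, only indices 1..n matter.\<close>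

definition S :: "(nat \<Rightarrow> real) \<Rightarrow> nat \<Rightarrow> nat \<Rightarrow> real" where
  "S E a b = (if a \<le> b then (\<Sum>i=a..b. 1 / E i) else 0)"

definition good :: "(nat \<Rightarrow> real) \<Rightarrow> nat \<Rightarrow> nat \<Rightarrow> nat \<Rightarrow> nat \<Rightarrow> nat \<Rightarrow> bool" where
  "good E n r a b c \<longleftrightarrow> a \<in> {0..r-1} \<and> b \<in> {r+1..n} \<and> c \<in> {r+1..n} \<and>
     real r - real a + real b - real c < E b * S E (a+1) b"

definition hf :: "(nat \<Rightarrow> real) \<Rightarrow> nat \<Rightarrow> nat \<Rightarrow> nat \<Rightarrow> nat \<Rightarrow> nat" where
  "hf E n r a c = (if \<exists>b\<in>{r+1..n}. good E n r a b c
                    then Max {b\<in>{r+1..n}. good E n r a b c} else r)"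

definition ef :: "(nat \<Rightarrow> real) \<Rightarrow> nat \<Rightarrow> nat \<Rightarrow> nat \<Rightarrow> nat \<Rightarrow> nat" where
  "ef E n r a b = (if \<exists>c\<in>{r+1..n}. good E n r a b c
                    then Min {c\<in>{r+1..n}. good E n r a b c} else n+1)"

definition gf :: "(nat \<Rightarrow> real) \<Rightarrow> nat \<Rightarrow> nat \<Rightarrow> nat \<Rightarrow> nat \<Rightarrow> nat" where
  "gf E n r b c = (if \<exists>a\<in>{0..r-1}. good E n r a b c
                    then Min {a\<in>{0..r-1}. good E n r a b c} else r)"

definition X1 :: "(nat \<Rightarrow> real) \<Rightarrow> nat \<Rightarrow> nat \<Rightarrow> (nat \<times> nat) set" where
  "X1 E n r = {(a,c). a \<in> {0..r-1} \<and> c \<in> {r+1..n} \<and> hf E n r a c > r}"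

definition X2 :: "(nat \<Rightarrow> real) \<Rightarrow> nat \<Rightarrow> nat \<Rightarrow> (nat \<times> nat) set" where
  "X2 E n r = {(a,b). a \<in> {0..r-1} \<and> b \<in> {r+1..n} \<and> b < ef E n r a b \<and> ef E n r a b \<le> n}"

definition X3 :: "(nat \<Rightarrow> real) \<Rightarrow> nat \<Rightarrow> nat \<Rightarrow> (nat \<times> nat) set" where
  "X3 E n r = {(b,c). b \<in> {r+1..n} \<and> c \<in> {r+1..n} \<and> b \<le> c \<and>
                      0 < gf E n r b c \<and> gf E n r b c \<le> r - 1}"

definition p1 :: "(nat \<Rightarrow> real) \<Rightarrow> nat \<Rightarrow> nat \<Rightarrow> nat \<Rightarrow> nat \<Rightarrow> nat \<Rightarrow> real" where
  "p1 E n r a c k = (let b = min (hf E n r a c) c;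
                         \<delta> = real r - real a + real b - real c in
     if 1 \<le> k \<and> k \<le> a then 1
     else if a+1 \<le> k \<and> k \<le> b then \<delta> / (E k * S E (a+1) b)
     else if b+1 \<le> k \<and> k \<le> c then 1 else 0)"

definition gamma1 :: "(nat \<Rightarrow> real) \<Rightarrow> nat \<Rightarrow> nat \<Rightarrow> nat \<Rightarrow> nat \<Rightarrow> real" where
  "gamma1 E n r a c = (let b = min (hf E n r a c) c;
                           \<delta> = real r - real a + real b - real c in \<delta> / S E (a+1) b)"

definition p2 :: "(nat \<Rightarrow> real) \<Rightarrow> nat \<Rightarrow> nat \<Rightarrow> nat \<Rightarrow> nat \<Rightarrow> nat \<Rightarrow> real" where
  "p2 E n r a b k = (let c = ef E n r a b in
     if 1 \<le> k \<and> k \<le> a then 1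
     else if a+1 \<le> k \<and> k \<le> b then E b / E k
     else if b+1 \<le> k \<and> k \<le> c-1 then 1
     else if k = c then real r - real a + real b - real c - E b * S E (a+1) (b-1)
     else 0)"

definition gamma2 :: "(nat \<Rightarrow> real) \<Rightarrow> nat \<Rightarrow> nat \<Rightarrow> nat \<Rightarrow> nat \<Rightarrow> real" where
  "gamma2 E n r a b = E b"

definition p3 :: "(nat \<Rightarrow> real) \<Rightarrow> nat \<Rightarrow> nat \<Rightarrow> nat \<Rightarrow> nat \<Rightarrow> nat \<Rightarrow> real" where
  "p3 E n r b c k = (let a = gf E n r b c in
     if 1 \<le> k \<and> k \<le> a-1 then 1
     else if k = a then real r - real a + real b - real c - E b * S E (a+1) (b-1)
     else if a+1 \<le> k \<and> k \<le> b then E b / E k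
     else if b+1 \<le> k \<and> k \<le> c then 1 else 0)"

definition gamma3 :: "(nat \<Rightarrow> real) \<Rightarrow> nat \<Rightarrow> nat \<Rightarrow> nat \<Rightarrow> nat \<Rightarrow> real" where
  "gamma3 E n r b c = E b"

definition p0 :: "nat \<Rightarrow> nat \<Rightarrow> nat \<Rightarrow> real" where
  "p0 n r k = (if 1 \<le> k \<and> k \<le> r then 1 else 0)"

definition gamma0 :: "(nat \<Rightarrow> real) \<Rightarrow> nat \<Rightarrow> real" where
  "gamma0 E r = E (r+1)"

definition inI :: "nat \<Rightarrow> nat \<Rightarrow> (nat \<Rightarrow> real) \<Rightarrow> bool" where
  "inI n r p \<longleftrightarrow> (\<forall>k\<in>{1..n}. 0 \<le> p k \<and> p k \<le> 1) \<and> (\<Sum>k=1..n. p k) = real r"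

definition objective :: "(nat \<Rightarrow> real) \<Rightarrow> nat \<Rightarrow> nat \<Rightarrow> (nat \<Rightarrow> real) \<Rightarrow> real" where
  "objective E n r p = (\<Sum>j=1..n. p j * E j) - 1/2 * (\<Sum>j=1..r. p j * E j)"

definition feasibleP :: "(nat \<Rightarrow> real) \<Rightarrow> nat \<Rightarrow> nat \<Rightarrow> (nat \<Rightarrow> real) \<Rightarrow> real \<Rightarrow> bool" where
  "feasibleP E n r p \<gamma> \<longleftrightarrow> inI n r p \<and> (\<forall>j\<in>{1..r}. p j * E j \<ge> \<gamma>) \<and>
                            (\<forall>t\<in>{r+1..n}. \<gamma> \<ge> p t * E t)"

definition optimalP :: "(nat \<Rightarrow> real) \<Rightarrow> nat \<Rightarrow> nat \<Rightarrow> (nat \<Rightarrow> real) \<Rightarrow> real \<Rightarrow> bool" where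
  "optimalP E n r p \<gamma> \<longleftrightarrow> feasibleP E n r p \<gamma> \<and>
     (\<forall>q \<gamma>'. feasibleP E n r q \<gamma>' \<longrightarrow> objective E n r q \<le> objective E n r p)"

definition candidates :: "(nat \<Rightarrow> real) \<Rightarrow> nat \<Rightarrow> nat \<Rightarrow> ((nat \<Rightarrow> real) \<times> real) set" where
  "candidates E n r = {(p0 n r, gamma0 E r)}
     \<union> (\<lambda>(a,c). (p1 E n r a c, gamma1 E n r a c)) ` X1 E n r
     \<union> (\<lambda>(a,b). (p2 E n r a b, gamma2 E n r a b)) ` X2 E n r
     \<union> (\<lambda>(b,c). (p3 E n r b c, gamma3 E n r b c)) ` X3 E n r"

end

theory Submission
  imports Defs "HOL-Analysis.Analysis"
begin

text \<open>The objective is continuous and the feasible set of (P-\<open>{1,\<dots>,r}\<close>) is compact, so a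
  maximiser exists; among the maximisers take one that maximises the mass \<open>\<Sum>t>r. p t\<close> and then
  minimises the level \<open>\<gamma>\<close>. Perturbing such a lexicographic optimum -- moving a unit of mass between
  two coordinates, or raising \<open>\<gamma>\<close> while keeping a block of tight coordinates \<open>p k * E k = \<gamma>\<close>
  tight -- shows that it has water-filling shape: ones up to the first lower index \<open>\<alpha>\<close> with
  \<open>p \<alpha> < 1\<close>, tight coordinates up to the last tight upper index \<open>b\<close>, ones up to the last
  positive index \<open>c\<close>, and at most one further fractional coordinate (at \<open>\<alpha>\<close> or at \<open>c\<close>).
  The constraint \<open>\<Sum>k p k = r\<close> then pins down the level, and (A2) rules out \<open>\<gamma> = E b\<close> when no
  coordinate besides the block is fractional; this identifies the optimum with p^0 or with one of
  p^{1,\<alpha>-1,c}, p^{2,\<alpha>-1,b}, p^{3,b,c}. So the best candidate is optimal; feasibility of the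
  candidates is a direct check from the inequalities defining good triplets.\<close>

section \<open>Sums of reciprocals\<close>

lemma sum_split_ivl:
  fixes f :: "nat \<Rightarrow> 'a::comm_monoid_add"
  assumes "m \<le> Suc k" "k \<le> n"
  shows "sum f {m..n} = sum f {m..k} + sum f {Suc k..n}"
proof -
  have "{m..n} = {m..k} \<union> {Suc k..n}" "{m..k} \<inter> {Suc k..n} = {}"
    using assms by auto
  then show ?thesis by (simp add: sum.union_disjoint)
qed

lemma sum_ones_block_ones:
  fixes f :: "nat \<Rightarrow> real"
  assumes "a \<le> b" "b \<le> c" "c \<le> n"
    and ones_lo: "\<And>k. 1 \<le> k \<Longrightarrow> k \<le> a \<Longrightarrow> f k = 1"
    and ones_hi: "\<And>k. b < k \<Longrightarrow> k \<le> c \<Longrightarrow> f k = 1"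
  shows "(\<Sum>k=1..n. f k) = real a + (\<Sum>k=a+1..b. f k) + (real c - real b) + (\<Sum>k=c+1..n. f k)"
proof -
  have "(\<Sum>k=1..n. f k) = (\<Sum>k=1..a. f k) + (\<Sum>k=a+1..b. f k) + (\<Sum>k=b+1..c. f k) + (\<Sum>k=c+1..n. f k)"
    using assms(1-3) sum_split_ivl[of 1 a n f] sum_split_ivl[of "a+1" b n f] sum_split_ivl[of "b+1" c n f]
    by simp
  moreover have "(\<Sum>k=1..a. f k) = real a"
    using ones_lo by (simp add: sum.cong[OF refl, of _ f "\<lambda>_. 1"])
  moreover have "(\<Sum>k=b+1..c. f k) = real c - real b"
    using ones_hi assms(2) by (simp add: sum.cong[OF refl, of _ f "\<lambda>_. 1"] of_nat_diff)
  ultimately show ?thesis by simp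
qed

lemma S_eq: "S E a b = (\<Sum>i=a..b. 1 / E i)"
  by (simp add: S_def)

lemma S_split: "a \<le> Suc k \<Longrightarrow> k \<le> b \<Longrightarrow> S E a b = S E a k + S E (Suc k) b"
  unfolding S_eq by (rule sum_split_ivl)

lemma S_Suc_right: "a \<le> Suc b \<Longrightarrow> S E a (Suc b) = S E a b + 1 / E (Suc b)"
  unfolding S_eq by simp

lemma mult_S_eq_sum: "c * S E a b = (\<Sum>i=a..b. c / E i)"
  unfolding S_eq by (simp add: sum_distrib_left)

lemma sum_restrict_ivl:
  fixes f :: "nat \<Rightarrow> real"
  shows "(\<Sum>k=m..N. if lo \<le> k \<and> k \<le> hi then f k else 0) = (\<Sum>k=max m lo..min N hi. f k)"
proof -
  have "(\<Sum>k=m..N. if lo \<le> k \<and> k \<le> hi then f k else 0) = (\<Sum>k=m..N. if k \<in> {lo..hi} then f k else 0)"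
    by simp
  also have "\<dots> = sum f ({m..N} \<inter> {lo..hi})" by (rule sum.inter_restrict[symmetric]) simp
  also have "{m..N} \<inter> {lo..hi} = {max m lo..min N hi}" by auto
  finally show ?thesis .
qed

locale lp_setting =
  fixes E :: "nat \<Rightarrow> real" and n r :: nat
  assumes r_pos: "0 < r" and r_less_n: "r < n"
    and E_decreasing: "\<forall>i j. 1 \<le> i \<longrightarrow> i < j \<longrightarrow> j \<le> n \<longrightarrow> E j < E i"
    and E_n_pos: "E n > 0"
    and S_non_integral: "\<forall>a\<in>{1..r}. \<forall>b\<in>{r+1..n}. E b * S E a b \<notin> \<int>"
begin

lemma E_less: "1 \<le> i \<Longrightarrow> i < j \<Longrightarrow> j \<le> n \<Longrightarrow> E j < E i"
  using E_decreasing by blast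

lemma E_le: "1 \<le> i \<Longrightarrow> i \<le> j \<Longrightarrow> j \<le> n \<Longrightarrow> E j \<le> E i"
  using E_less by (cases "i = j") (auto intro: less_imp_le)

lemma E_pos: "1 \<le> k \<Longrightarrow> k \<le> n \<Longrightarrow> 0 < E k"
  using E_le[of k n] E_n_pos by simp

lemma S_nonneg: "1 \<le> a \<Longrightarrow> b \<le> n \<Longrightarrow> 0 \<le> S E a b"
  unfolding S_eq by (intro sum_nonneg) (auto intro!: less_imp_le[OF E_pos])

lemma S_pos: "1 \<le> a \<Longrightarrow> a \<le> b \<Longrightarrow> b \<le> n \<Longrightarrow> 0 < S E a b"
  unfolding S_eq by (intro sum_pos) (auto intro: E_pos)

lemma E_mult_S_last:
  assumes "a \<le> b" "1 \<le> b" "b \<le> n"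
  shows "E b * S E a b = E b * S E a (b - 1) + 1"
proof -
  have "S E a b = S E a (b - 1) + 1 / E b"
    using assms S_Suc_right[of a "b - 1" E] by simp
  then show ?thesis using E_pos[of b] assms by (simp add: field_simps)
qed

lemma E_mult_S_le_card:
  assumes "1 \<le> lo" "lo \<le> Suc hi" "hi \<le> m" "m \<le> n"
  shows "E m * S E lo hi \<le> real hi + 1 - real lo"
proof -
  have "E m * S E lo hi \<le> (\<Sum>i=lo..hi. 1)"
    unfolding mult_S_eq_sum
  proof (intro sum_mono)
    fix i assume "i \<in> {lo..hi}"
    then have "E m \<le> E i" "0 < E i" using assms by (auto intro!: E_le E_pos)
    then show "E m / E i \<le> 1" by simp
  qed
  then show ?thesis using assms(2) by (simp add: of_nat_diff)
qed

lemma good_iff: "good E n r a b c \<longleftrightarrow> a < r \<and> r < b \<and> b \<le> n \<and> r < c \<and> c \<le> n \<and>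
     real r - real a + real b - real c < E b * S E (a+1) b"
  using r_pos by (auto simp: good_def)

section \<open>Good triplets\<close>

text \<open>Goodness passes to smaller \<open>b\<close> and to larger \<open>a\<close>: every term \<open>E b / E i\<close> dropped from
  \<open>E b * S E (a+1) b\<close> is at most \<open>1\<close>, so the right-hand side falls by no more than the left.\<close>

lemma good_decrease_b:
  assumes "good E n r a b' c" "r < b" "b \<le> b'"
  shows "good E n r a b c"
proof -
  have g: "a < r" "b' \<le> n" "real r - real a + real b' - real c < E b' * S E (a+1) b'"
    using assms(1) by (auto simp: good_iff)
  have "E b' * S E (a+1) b' = E b' * S E (a+1) b + E b' * S E (Suc b) b'"
    using assms g by (subst S_split[of _ b]) (auto simp: algebra_simps)
  also have "\<dots> \<le> E b * S E (a+1) b + (real b' + 1 - real (Suc b))"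
    using assms g by (intro add_mono mult_right_mono E_le S_nonneg E_mult_S_le_card) auto
  finally show ?thesis using g assms by (auto simp: good_iff)
qed

lemma good_increase_c: "good E n r a b c \<Longrightarrow> c \<le> c' \<Longrightarrow> c' \<le> n \<Longrightarrow> good E n r a b c'"
  by (auto simp: good_iff)

lemma good_increase_a:
  assumes "good E n r a b c" "a \<le> a'" "a' < r"
  shows "good E n r a' b c"
proof -
  have g: "r < b" "b \<le> n" "real r - real a + real b - real c < E b * S E (a+1) b"
    using assms(1) by (auto simp: good_iff)
  have "E b * S E (a+1) b = E b * S E (a+1) a' + E b * S E (a'+1) b"
    using assms g by (subst S_split[of _ a']) (auto simp: algebra_simps)
  also have "\<dots> \<le> (real a' + 1 - real (a+1)) + E b * S E (a'+1) b"
    using assms g by (intro add_mono E_mult_S_le_card) auto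
  finally show ?thesis using assms g by (auto simp: good_iff)
qed

lemma hf_eq_Max:
  "hf E n r a c = (if {b\<in>{r+1..n}. good E n r a b c} = {} then r else Max {b\<in>{r+1..n}. good E n r a b c})"
  unfolding hf_def by (simp only: Bex_def Collect_empty_eq) auto

lemma X1_min_hf_good:
  assumes "(a,c) \<in> X1 E n r"
  defines "b \<equiv> min (hf E n r a c) c"
  shows "b \<le> c" "good E n r a b c" "b < c \<Longrightarrow> \<not> good E n r a (Suc b) c"
proof -
  define G where "G = {b'\<in>{r+1..n}. good E n r a b' c}"
  have fin: "finite G" by (simp add: G_def)
  have hf: "hf E n r a c = (if G = {} then r else Max G)"
    unfolding G_def by (rule hf_eq_Max)
  have X: "r < c" "r < hf E n r a c" using assms by (auto simp: X1_def)
  then have ne: "G \<noteq> {}" using hf by auto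
  then have "Max G \<in> G" using fin by (intro Max_in)
  then have "good E n r a (Max G) c" by (simp add: G_def)
  moreover have "r < b" "b \<le> Max G" using X hf ne by (auto simp: b_def)
  ultimately show "good E n r a b c" by (rule good_decrease_b)
  show "b \<le> c" by (simp add: b_def)
  show "\<not> good E n r a (Suc b) c" if "b < c"
  proof
    assume "good E n r a (Suc b) c"
    then have "Suc b \<in> G" by (auto simp: G_def good_iff)
    then have "Suc b \<le> Max G" by (rule Max_ge[OF fin])
    then show False using that hf ne by (simp add: b_def)
  qed
qed

lemma X1_min_hfI:
  assumes "b \<le> c" "good E n r a b c" "b < c \<Longrightarrow> \<not> good E n r a (Suc b) c"
  shows "(a,c) \<in> X1 E n r" "min (hf E n r a c) c = b"
proof -
  define G where "G = {b'\<in>{r+1..n}. good E n r a b' c}"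
  have fin: "finite G" by (simp add: G_def)
  have hf: "hf E n r a c = (if G = {} then r else Max G)"
    unfolding G_def by (rule hf_eq_Max)
  have bG: "b \<in> G" using assms by (auto simp: G_def good_iff)
  then have ne: "G \<noteq> {}" by blast
  have hf_ge: "b \<le> hf E n r a c" using hf ne Max_ge[OF fin bG] by simp
  have "hf E n r a c \<le> b" if "b < c"
  proof -
    have "b' \<le> b" if "b' \<in> G" for b'
    proof (rule ccontr)
      assume "\<not> b' \<le> b"
      moreover have "good E n r a b' c" using \<open>b' \<in> G\<close> by (simp add: G_def)
      moreover have "r < Suc b" using assms by (simp add: good_iff)
      ultimately have "good E n r a (Suc b) c" by (intro good_decrease_b[of a b' c "Suc b"]) auto
      then show False using assms \<open>b < c\<close> by simp
    qed
    then have "Max G \<le> b" using fin ne by (intro Max.boundedI) auto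
    then show ?thesis using hf ne by simp
  qed
  moreover have "a < r" "r < b" "r < c" "c \<le> n" using assms by (simp_all add: good_iff)
  ultimately show "(a,c) \<in> X1 E n r" "min (hf E n r a c) c = b"
    using assms hf_ge by (cases "b < c"; auto simp: X1_def)+
qed

lemma ef_eq_Min:
  "ef E n r a b = (if {c\<in>{r+1..n}. good E n r a b c} = {} then n+1 else Min {c\<in>{r+1..n}. good E n r a b c})"
  unfolding ef_def by (simp only: Bex_def Collect_empty_eq) auto

lemma X2_ef_good:
  assumes "(a,b) \<in> X2 E n r"
  defines "c \<equiv> ef E n r a b"
  shows "b < c" "good E n r a b c" "\<not> good E n r a b (c - 1)"
proof -
  define G where "G = {c'\<in>{r+1..n}. good E n r a b c'}"
  have fin: "finite G" by (simp add: G_def)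
  have ef: "ef E n r a b = (if G = {} then n+1 else Min G)"
    unfolding G_def by (rule ef_eq_Min)
  have X: "b < c" "c \<le> n" using assms by (auto simp: X2_def)
  then show "b < c" by simp
  have ne: "G \<noteq> {}" using X ef by (auto simp: c_def)
  then have "Min G \<in> G" using fin by (intro Min_in)
  moreover have "c = Min G" using ef ne by (simp add: c_def)
  ultimately show "good E n r a b c" by (simp add: G_def)
  show "\<not> good E n r a b (c - 1)"
  proof
    assume "good E n r a b (c - 1)"
    then have "c - 1 \<in> G" by (auto simp: G_def good_iff)
    then have "Min G \<le> c - 1" by (rule Min_le[OF fin])
    then show False using \<open>b < c\<close> ef ne by (simp add: c_def)
  qed
qed

lemma X2_efI:
  assumes "b < c" "good E n r a b c" "\<not> good E n r a b (c - 1)"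
  shows "(a,b) \<in> X2 E n r" "ef E n r a b = c"
proof -
  define G where "G = {c'\<in>{r+1..n}. good E n r a b c'}"
  have fin: "finite G" by (simp add: G_def)
  have ef: "ef E n r a b = (if G = {} then n+1 else Min G)"
    unfolding G_def by (rule ef_eq_Min)
  have cG: "c \<in> G" using assms by (auto simp: G_def good_iff)
  then have ne: "G \<noteq> {}" by blast
  have "c \<le> c'" if "c' \<in> G" for c'
  proof (rule ccontr)
    assume "\<not> c \<le> c'"
    moreover have "good E n r a b c'" using \<open>c' \<in> G\<close> by (simp add: G_def)
    moreover have "c \<le> n" using assms by (simp add: good_iff)
    ultimately have "good E n r a b (c - 1)" by (intro good_increase_c[of a b c' "c - 1"]) auto
    then show False using assms by simp
  qed
  then have "Min G = c" using fin cG by (intro Min_eqI) auto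
  then show "ef E n r a b = c" using ef ne by simp
  moreover have "a < r" "r < b" "b \<le> n" "c \<le> n" using assms by (simp_all add: good_iff)
  ultimately show "(a,b) \<in> X2 E n r" using assms by (auto simp: X2_def)
qed

lemma gf_eq_Min:
  "gf E n r b c = (if {a\<in>{0..r-1}. good E n r a b c} = {} then r else Min {a\<in>{0..r-1}. good E n r a b c})"
  unfolding gf_def by (simp only: Bex_def Collect_empty_eq) auto

lemma X3_gf_good:
  assumes "(b,c) \<in> X3 E n r"
  defines "a \<equiv> gf E n r b c"
  shows "0 < a" "b \<le> c" "good E n r a b c" "\<not> good E n r (a - 1) b c"
proof -
  define G where "G = {a'\<in>{0..r-1}. good E n r a' b c}"
  have fin: "finite G" by (simp add: G_def)
  have gf: "gf E n r b c = (if G = {} then r else Min G)"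
    unfolding G_def by (rule gf_eq_Min)
  have X: "0 < a" "a \<le> r - 1" "b \<le> c" using assms by (auto simp: X3_def)
  then show "0 < a" "b \<le> c" by simp_all
  have ne: "G \<noteq> {}" using X gf r_pos by (cases "G = {}") (auto simp: a_def)
  then have "Min G \<in> G" using fin by (intro Min_in)
  moreover have "a = Min G" using gf ne by (simp add: a_def)
  ultimately show "good E n r a b c" by (simp add: G_def)
  show "\<not> good E n r (a - 1) b c"
  proof
    assume "good E n r (a - 1) b c"
    then have "a - 1 \<in> G" by (auto simp: G_def good_iff)
    then have "Min G \<le> a - 1" by (rule Min_le[OF fin])
    then show False using \<open>0 < a\<close> gf ne by (simp add: a_def)
  qed
qed

lemma X3_gfI:
  assumes "0 < a" "b \<le> c" "good E n r a b c" "\<not> good E n r (a - 1) b c"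
  shows "(b,c) \<in> X3 E n r" "gf E n r b c = a"
proof -
  define G where "G = {a'\<in>{0..r-1}. good E n r a' b c}"
  have fin: "finite G" by (simp add: G_def)
  have gf: "gf E n r b c = (if G = {} then r else Min G)"
    unfolding G_def by (rule gf_eq_Min)
  have aG: "a \<in> G" using assms by (auto simp: G_def good_iff)
  then have ne: "G \<noteq> {}" by blast
  have "a \<le> a'" if "a' \<in> G" for a'
  proof (rule ccontr)
    assume "\<not> a \<le> a'"
    moreover have "good E n r a' b c" using \<open>a' \<in> G\<close> by (simp add: G_def)
    moreover have "a < r" using assms by (simp add: good_iff)
    ultimately have "good E n r (a - 1) b c" by (intro good_increase_a[of a' b c "a - 1"]) auto
    then show False using assms by simp
  qed
  then have "Min G = a" using fin aG by (intro Min_eqI) auto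
  then show "gf E n r b c = a" using gf ne by simp
  moreover have "a < r" "r < b" "c \<le> n" using assms by (simp_all add: good_iff)
  ultimately show "(b,c) \<in> X3 E n r" using assms by (auto simp: X3_def)
qed

section \<open>Feasibility of the candidates\<close>

lemma feasibleP_iff:
  "feasibleP E n r p \<gamma> \<longleftrightarrow> (\<Sum>k=1..n. p k) = real r \<and>
     (\<forall>k\<in>{1..n}. 0 \<le> p k \<and> p k \<le> 1 \<and> (k \<le> r \<longrightarrow> \<gamma> \<le> p k * E k) \<and> (r < k \<longrightarrow> p k * E k \<le> \<gamma>))"
  using r_less_n by (auto simp: feasibleP_def inI_def)

lemma p0_feasible: "feasibleP E n r (p0 n r) (gamma0 E r)"
  unfolding feasibleP_iff
proof
  show "(\<Sum>k=1..n. p0 n r k) = real r"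
    using sum_ones_block_ones[of r r r n "p0 n r"] r_less_n by (simp add: p0_def)
  show "\<forall>k\<in>{1..n}. 0 \<le> p0 n r k \<and> p0 n r k \<le> 1 \<and> (k \<le> r \<longrightarrow> gamma0 E r \<le> p0 n r k * E k) \<and>
      (r < k \<longrightarrow> p0 n r k * E k \<le> gamma0 E r)"
    using r_less_n E_le[of _ "r+1"] E_pos[of "r+1"] by (auto simp: p0_def gamma0_def)
qed

lemma gamma1_bounds:
  assumes "(a,c) \<in> X1 E n r" and b: "b = min (hf E n r a c) c"
  shows "0 < gamma1 E n r a c" "gamma1 E n r a c < E b"
    "b < c \<Longrightarrow> E (Suc b) \<le> gamma1 E n r a c"
    "gamma1 E n r a c * S E (a+1) b = real r - real a + real b - real c"
proof -
  note H = X1_min_hf_good[OF assms(1), folded b]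
  then have abc: "a < r" "r < b" "b \<le> n" "c \<le> n" by (auto simp: good_iff)
  define \<delta> where "\<delta> = real r - real a + real b - real c"
  have Sb: "0 < S E (a+1) b" using abc H by (intro S_pos) auto
  have \<gamma>: "gamma1 E n r a c = \<delta> / S E (a+1) b"
    by (simp add: gamma1_def Let_def \<delta>_def b)
  show "gamma1 E n r a c * S E (a+1) b = \<delta>" using Sb by (simp add: \<gamma>)
  show "gamma1 E n r a c < E b"
    using H Sb by (simp add: \<gamma> good_iff \<delta>_def divide_less_eq)
  show ge: "E (Suc b) \<le> gamma1 E n r a c" if "b < c"
  proof -
    have "E (Suc b) * S E (a+1) (Suc b) = E (Suc b) * S E (a+1) b + 1"
      using abc that H E_pos[of "Suc b"] by (simp add: S_Suc_right field_simps)
    moreover have "\<not> real r - real a + real (Suc b) - real c < E (Suc b) * S E (a+1) (Suc b)"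
      using H that abc by (auto simp: good_iff)
    ultimately show ?thesis using Sb by (simp add: \<gamma> \<delta>_def le_divide_eq)
  qed
  show "0 < gamma1 E n r a c"
  proof (cases "b < c")
    case True
    then show ?thesis using ge E_pos[of "Suc b"] abc by fastforce
  next
    case False
    then show ?thesis using H abc Sb by (simp add: \<gamma> \<delta>_def)
  qed
qed

lemma p1_eq:
  assumes "(a,c) \<in> X1 E n r" and b: "b = min (hf E n r a c) c"
  shows "p1 E n r a c k = (if 1 \<le> k \<and> k \<le> a then 1 else if a < k \<and> k \<le> b then gamma1 E n r a c / E k
      else if b < k \<and> k \<le> c then 1 else 0)"
  by (simp add: p1_def gamma1_def Let_def b[symmetric] Suc_le_eq)

lemma p1_feasible:
  assumes X: "(a,c) \<in> X1 E n r"
  shows "feasibleP E n r (p1 E n r a c) (gamma1 E n r a c)"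
proof -
  define b where "b = min (hf E n r a c) c"
  define \<gamma> where "\<gamma> = gamma1 E n r a c"
  note level = gamma1_bounds[OF X b_def, folded \<gamma>_def]
  note X1_min_hf_good[OF X, folded b_def]
  then have abc: "a < r" "r < b" "b \<le> c" "c \<le> n" by (auto simp: good_iff)
  note p = p1_eq[OF X b_def, folded \<gamma>_def]
  have "(\<Sum>k=1..n. p1 E n r a c k) = real a + (\<Sum>k=a+1..b. \<gamma> / E k) + (real c - real b)"
    using sum_ones_block_ones[of a b c n "p1 E n r a c"] abc by (simp add: p)
  also have "\<dots> = real r" using level(4) by (simp add: mult_S_eq_sum[symmetric])
  finally have "(\<Sum>k=1..n. p1 E n r a c k) = real r" .
  moreover have "0 \<le> p1 E n r a c k \<and> p1 E n r a c k \<le> 1 \<and> (k \<le> r \<longrightarrow> \<gamma> \<le> p1 E n r a c k * E k) \<and>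
      (r < k \<longrightarrow> p1 E n r a c k * E k \<le> \<gamma>)" if k: "k \<in> {1..n}" for k
  proof -
    have Ek: "0 < E k" using k by (intro E_pos) auto
    consider "k \<le> a" | "a < k" "k \<le> b" | "b < k" "k \<le> c" | "c < k" by linarith
    then show ?thesis
    proof cases
      case 1
      then show ?thesis using k abc level(2) E_le[of k b] by (auto simp: p)
    next
      case 2
      then show ?thesis using k abc level(1,2) E_le[of k b] Ek by (auto simp: p field_simps)
    next
      case 3
      then show ?thesis using k abc level(3) E_le[of "Suc b" k] by (auto simp: p)
    next
      case 4
      then show ?thesis using abc level(1) by (auto simp: p)
    qed
  qed
  ultimately show ?thesis by (simp add: feasibleP_iff \<gamma>_def)
qed

lemma X2_last_value_bounds:
  assumes "(a,b) \<in> X2 E n r" and c: "c = ef E n r a b"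
  defines "q \<equiv> real r - real a + real b - real c - E b * S E (a+1) (b-1)"
  shows "0 \<le> q" "q < 1"
proof -
  note H = X2_ef_good[OF assms(1), folded c]
  then have abc: "a < r" "r < b" "b \<le> n" "c \<le> n" by (auto simp: good_iff)
  have ES: "E b * S E (a+1) b = E b * S E (a+1) (b-1) + 1"
    using abc by (intro E_mult_S_last) auto
  show "q < 1" using H ES by (simp add: good_iff q_def)
  have "real (c - 1) = real c - 1" using H by (simp add: of_nat_diff)
  then show "0 \<le> q" using H abc ES by (auto simp: good_iff q_def)
qed

lemma p2_eq:
  assumes "(a,b) \<in> X2 E n r" and c: "c = ef E n r a b"
  shows "p2 E n r a b k = (if 1 \<le> k \<and> k \<le> a then 1 else if a < k \<and> k \<le> b then E b / E k
      else if b < k \<and> k < c then 1 else if k = c then real r - real a + real b - real c - E b * S E (a+1) (b-1)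
      else 0)"
  using X2_ef_good(1)[OF assms(1), folded c] by (auto simp: p2_def Let_def c[symmetric])

lemma sum_p2:
  assumes X: "(a,b) \<in> X2 E n r"
  shows "(\<Sum>k=1..n. p2 E n r a b k) = real r"
proof -
  define c where "c = ef E n r a b"
  note X2_ef_good[OF X, folded c_def]
  then have abc: "a < r" "r < b" "b < c" "c \<le> n" by (auto simp: good_iff)
  note p = p2_eq[OF X c_def]
  have "(\<Sum>k=1..n. p2 E n r a b k) =
      real a + (\<Sum>k=a+1..b. E b / E k) + (real (c - 1) - real b) + (\<Sum>k=c..n. p2 E n r a b k)"
    using sum_ones_block_ones[of a b "c - 1" n "p2 E n r a b"] abc by (simp add: p)
  also have "(\<Sum>k=c..n. p2 E n r a b k) = real r - real a + real b - real c - E b * S E (a+1) (b-1)"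
    using abc by (simp add: sum.atLeast_Suc_atMost[of c n] p)
  finally show ?thesis
    using abc E_mult_S_last[of "a+1" b] by (simp add: mult_S_eq_sum[symmetric] of_nat_diff)
qed

lemma p2_feasible:
  assumes X: "(a,b) \<in> X2 E n r"
  shows "feasibleP E n r (p2 E n r a b) (gamma2 E n r a b)"
proof -
  define c where "c = ef E n r a b"
  define q where "q = real r - real a + real b - real c - E b * S E (a+1) (b-1)"
  note level = X2_last_value_bounds[OF X c_def, folded q_def]
  note X2_ef_good[OF X, folded c_def]
  then have abc: "a < r" "r < b" "b < c" "c \<le> n" by (auto simp: good_iff)
  note p = p2_eq[OF X c_def, folded q_def]
  have "0 \<le> p2 E n r a b k \<and> p2 E n r a b k \<le> 1 \<and> (k \<le> r \<longrightarrow> E b \<le> p2 E n r a b k * E k) \<and>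
      (r < k \<longrightarrow> p2 E n r a b k * E k \<le> E b)" if k: "k \<in> {1..n}" for k
  proof -
    have Ek: "0 < E k" using k by (intro E_pos) auto
    consider "k \<le> a" | "a < k" "k \<le> b" | "b < k" "k < c" | "k = c" | "c < k" by linarith
    then show ?thesis
    proof cases
      case 1
      then show ?thesis using k abc E_le[of k b] by (auto simp: p)
    next
      case 2
      then show ?thesis using k abc E_le[of k b] E_pos[of b] Ek by (auto simp: p field_simps)
    next
      case 3
      then show ?thesis using k abc E_le[of b k] by (auto simp: p)
    next
      case 4
      have "q * E c \<le> 1 * E c" using level Ek 4 by (intro mult_right_mono) auto
      then show ?thesis using 4 abc level E_le[of b c] by (auto simp: p)
    next
      case 5
      then show ?thesis using abc E_pos[of b] by (auto simp: p)
    qed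
  qed
  then show ?thesis using sum_p2[OF X] by (simp add: feasibleP_iff gamma2_def)
qed

lemma X3_first_value_bounds:
  assumes "(b,c) \<in> X3 E n r" and a: "a = gf E n r b c"
  defines "q \<equiv> real r - real a + real b - real c - E b * S E (a+1) (b-1)"
  shows "E b \<le> q * E a" "q < 1"
proof -
  note H = X3_gf_good[OF assms(1), folded a]
  then have abc: "a < r" "r < b" "b \<le> n" "c \<le> n" by (auto simp: good_iff)
  have ES: "E b * S E (a+1) b = E b * S E (a+1) (b-1) + 1"
    using abc by (intro E_mult_S_last) auto
  show "q < 1" using H ES by (simp add: good_iff q_def)
  have "S E a b = 1 / E a + S E (a+1) b"
    using abc S_split[of a a b E] by (simp add: S_eq)
  then have "E b * S E a b = E b / E a + E b * S E (a+1) (b-1) + 1"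
    using ES by (simp add: algebra_simps)
  moreover have "real (a - 1) = real a - 1" "a - 1 + 1 = a" using H by (auto simp: of_nat_diff)
  ultimately have "E b / E a \<le> q"
    using H abc by (auto simp: good_iff q_def)
  then show "E b \<le> q * E a" using E_pos[of a] H abc by (simp add: divide_le_eq)
qed

lemma p3_eq:
  assumes "(b,c) \<in> X3 E n r" and a: "a = gf E n r b c"
  shows "p3 E n r b c k = (if 1 \<le> k \<and> k < a then 1
      else if k = a then real r - real a + real b - real c - E b * S E (a+1) (b-1)
      else if a < k \<and> k \<le> b then E b / E k else if b < k \<and> k \<le> c then 1 else 0)"
  using X3_gf_good(1)[OF assms(1), folded a] by (auto simp: p3_def Let_def a[symmetric])

lemma sum_p3:
  assumes X: "(b,c) \<in> X3 E n r"
  shows "(\<Sum>k=1..n. p3 E n r b c k) = real r"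
proof -
  define a where "a = gf E n r b c"
  note X3_gf_good[OF X, folded a_def]
  then have abc: "0 < a" "a < r" "r < b" "b \<le> c" "c \<le> n" by (auto simp: good_iff)
  note p = p3_eq[OF X a_def]
  have "(\<Sum>k=1..n. p3 E n r b c k) =
      real (a - 1) + (\<Sum>k=a..b. p3 E n r b c k) + (real c - real b) + (\<Sum>k=c+1..n. p3 E n r b c k)"
    using sum_ones_block_ones[of "a - 1" b c n "p3 E n r b c"] abc by (simp add: p)
  also have "(\<Sum>k=a..b. p3 E n r b c k) =
      real r - real a + real b - real c - E b * S E (a+1) (b-1) + (\<Sum>k=a+1..b. E b / E k)"
    using abc by (simp add: sum.atLeast_Suc_atMost[of a b] p)
  also have "(\<Sum>k=c+1..n. p3 E n r b c k) = 0" using abc by (simp add: p)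
  finally show ?thesis
    using abc E_mult_S_last[of "a+1" b] by (simp add: mult_S_eq_sum[symmetric] of_nat_diff)
qed

lemma p3_feasible:
  assumes X: "(b,c) \<in> X3 E n r"
  shows "feasibleP E n r (p3 E n r b c) (gamma3 E n r b c)"
proof -
  define a where "a = gf E n r b c"
  define q where "q = real r - real a + real b - real c - E b * S E (a+1) (b-1)"
  note level = X3_first_value_bounds[OF X a_def, folded q_def]
  note X3_gf_good[OF X, folded a_def]
  then have abc: "0 < a" "a < r" "r < b" "b \<le> c" "c \<le> n" by (auto simp: good_iff)
  note p = p3_eq[OF X a_def, folded q_def]
  have "0 \<le> p3 E n r b c k \<and> p3 E n r b c k \<le> 1 \<and> (k \<le> r \<longrightarrow> E b \<le> p3 E n r b c k * E k) \<and>
      (r < k \<longrightarrow> p3 E n r b c k * E k \<le> E b)" if k: "k \<in> {1..n}" for k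
  proof -
    have Ek: "0 < E k" using k by (intro E_pos) auto
    consider "k < a" | "k = a" | "a < k" "k \<le> b" | "b < k" "k \<le> c" | "c < k" by linarith
    then show ?thesis
    proof cases
      case 1
      then show ?thesis using k abc E_le[of k b] by (auto simp: p)
    next
      case 2
      have "0 \<le> q * E a" using level E_pos[of b] abc by linarith
      then have "0 \<le> q" using Ek 2 by (simp add: zero_le_mult_iff)
      then show ?thesis using 2 abc level by (auto simp: p)
    next
      case 3
      then show ?thesis using k abc E_le[of k b] E_pos[of b] Ek by (auto simp: p field_simps)
    next
      case 4
      then show ?thesis using k abc E_le[of b k] by (auto simp: p)
    next
      case 5
      then show ?thesis using abc E_pos[of b] by (auto simp: p)
    qed
  qed
  then show ?thesis using sum_p3[OF X] by (simp add: feasibleP_iff gamma3_def)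
qed

lemma candidate_feasible: "(p, \<gamma>) \<in> candidates E n r \<Longrightarrow> feasibleP E n r p \<gamma>"
  unfolding candidates_def using p0_feasible p1_feasible p2_feasible p3_feasible by auto

lemma candidates_memI:
  "(p0 n r, gamma0 E r) \<in> candidates E n r"
  "(a, c) \<in> X1 E n r \<Longrightarrow> (p1 E n r a c, gamma1 E n r a c) \<in> candidates E n r"
  "(a, b) \<in> X2 E n r \<Longrightarrow> (p2 E n r a b, gamma2 E n r a b) \<in> candidates E n r"
  "(b, c) \<in> X3 E n r \<Longrightarrow> (p3 E n r b c, gamma3 E n r b c) \<in> candidates E n r"
  by (force simp: candidates_def)+

lemma objective_cong: "(\<And>k. 1 \<le> k \<Longrightarrow> k \<le> n \<Longrightarrow> p k = q k) \<Longrightarrow> objective E n r p = objective E n r q"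
  using r_less_n unfolding objective_def
  by (intro arg_cong2[where f = "(-)"] arg_cong2[where f = "(*)"] sum.cong) auto

lemma candidate_dominates:
  assumes "(q, \<gamma>) \<in> candidates E n r" "\<forall>k\<in>{1..n}. z k = q k"
  shows "\<exists>(p, \<gamma>)\<in>candidates E n r. objective E n r z \<le> objective E n r p"
  using assms objective_cong[of z q] by fastforce

section \<open>A lexicographic optimum\<close>

text \<open>A pair \<open>(p, \<gamma>)\<close> is encoded as one point \<open>z\<close> with \<open>z 0 = \<gamma>\<close>; fixing the coordinates
  beyond \<open>n\<close> to \<open>0\<close> makes the feasible set compact in the product topology.\<close>

definition feasible_points :: "(nat \<Rightarrow> real) set" where
  "feasible_points = {z. feasibleP E n r z (z 0) \<and> (\<forall>k>n. z k = 0)}"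

definition upper_mass :: "(nat \<Rightarrow> real) \<Rightarrow> real" where
  "upper_mass z = (\<Sum>t=r+1..n. z t)"

definition lexopt :: "(nat \<Rightarrow> real) \<Rightarrow> bool" where
  "lexopt z \<longleftrightarrow> z \<in> feasible_points \<and>
     (\<forall>y\<in>feasible_points. objective E n r y \<le> objective E n r z) \<and>
     (\<forall>y\<in>feasible_points. objective E n r y = objective E n r z \<longrightarrow> upper_mass y \<le> upper_mass z) \<and>
     (\<forall>y\<in>feasible_points. objective E n r y = objective E n r z \<and> upper_mass y = upper_mass z
        \<longrightarrow> z 0 \<le> y 0)"

lemma feasible_points_iff:
  "z \<in> feasible_points \<longleftrightarrow> (\<Sum>k=1..n. z k) = real r \<and>
     (\<forall>k. 1 \<le> k \<and> k \<le> n \<longrightarrow> 0 \<le> z k \<and> z k \<le> 1 \<and> (k \<le> r \<longrightarrow> z 0 \<le> z k * E k) \<and>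
        (r < k \<longrightarrow> z k * E k \<le> z 0)) \<and> (\<forall>k. n < k \<longrightarrow> z k = 0)"
  by (auto simp: feasible_points_def feasibleP_iff)

lemma feasible_points_level_bounds:
  assumes "z \<in> feasible_points"
  shows "0 \<le> z 0" "z 0 \<le> E 1"
proof -
  have "0 \<le> z n * E n" "z n * E n \<le> z 0"
    using assms r_less_n E_n_pos by (auto simp: feasible_points_iff)
  then show "0 \<le> z 0" by linarith
  have "z 0 \<le> z 1 * E 1" "z 1 \<le> 1"
    using assms r_pos r_less_n by (auto simp: feasible_points_iff)
  moreover have "z 1 * E 1 \<le> 1 * E 1" using E_pos[of 1] r_less_n \<open>z 1 \<le> 1\<close> by (intro mult_right_mono) auto
  ultimately show "z 0 \<le> E 1" by simp
qed

lemma compact_feasible_points: "compact feasible_points"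
proof -
  define hi where "hi k = (if k = 0 then E 1 else if k \<le> n then 1 else 0)" for k
  have box: "compact (PiE UNIV (\<lambda>k. {0..hi k}))"
    using compactin_PiE[of "\<lambda>_. euclidean" UNIV "\<lambda>k. {0..hi k}"]
    by (simp add: euclidean_product_topology)
  have "feasible_points \<subseteq> PiE UNIV (\<lambda>k. {0..hi k})"
  proof
    fix z assume z: "z \<in> feasible_points"
    have "z k \<in> {0..hi k}" for k
      using z feasible_points_level_bounds[OF z] by (cases "k = 0") (auto simp: feasible_points_iff hi_def)
    then show "z \<in> PiE UNIV (\<lambda>k. {0..hi k})" by auto
  qed
  moreover have "closed {z. z \<in> feasible_points}"
    unfolding feasible_points_iff
    by (intro closed_Collect_conj closed_Collect_all closed_Collect_imp open_Collect_const
        closed_Collect_eq closed_Collect_le continuous_intros continuous_on_product_coordinates)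
  ultimately show ?thesis using box compact_Int_closed by (metis Collect_mem_eq inf.absorb_iff2)
qed

lemma lexopt_exists: "\<exists>z. lexopt z"
proof -
  have coord: "continuous_on A (\<lambda>y :: nat \<Rightarrow> real. y k)" for A k
    by (rule continuous_on_subset[OF continuous_on_product_coordinates]) auto
  have cont: "continuous_on A (objective E n r)" "continuous_on A upper_mass" for A
    unfolding objective_def upper_mass_def by (intro continuous_intros coord)+
  have "(p0 n r)(0 := gamma0 E r) \<in> feasible_points"
    using p0_feasible r_less_n by (auto simp: feasible_points_iff feasibleP_iff p0_def)
  then have ne: "feasible_points \<noteq> {}" by blast
  obtain z1 where z1: "z1 \<in> feasible_points" "\<forall>y\<in>feasible_points. objective E n r y \<le> objective E n r z1"
    using continuous_attains_sup[OF compact_feasible_points ne cont(1)] by blast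
  define M1 where "M1 = feasible_points \<inter> {y. objective E n r y = objective E n r z1}"
  have M1: "compact M1" "M1 \<noteq> {}" using z1 unfolding M1_def
    by (auto intro!: compact_Int_closed compact_feasible_points closed_Collect_eq cont continuous_on_const)
  obtain z2 where z2: "z2 \<in> M1" "\<forall>y\<in>M1. upper_mass y \<le> upper_mass z2"
    using continuous_attains_sup[OF M1 cont(2)] by blast
  define M2 where "M2 = M1 \<inter> {y. upper_mass y = upper_mass z2}"
  have M2: "compact M2" "M2 \<noteq> {}" using z2 unfolding M2_def
    by (auto intro!: compact_Int_closed M1 closed_Collect_eq cont continuous_on_const)
  obtain z3 where z3: "z3 \<in> M2" "\<forall>y\<in>M2. z3 0 \<le> y 0"
    using continuous_attains_inf[OF M2 coord] by blast
  then have "lexopt z3" using z1 z2 by (auto simp: lexopt_def M1_def M2_def)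
  then show ?thesis by blast
qed

end

section \<open>Perturbations of a lexicographic optimum\<close>

lemma eventually_at_right_affine_nonneg:
  fixes a b :: real
  assumes "0 \<le> a" "a = 0 \<Longrightarrow> 0 \<le> b"
  shows "eventually (\<lambda>\<epsilon>. 0 \<le> a + \<epsilon> * b) (at_right 0)"
proof (cases "a = 0")
  case True
  show ?thesis
    using eventually_at_right_less[of 0] by eventually_elim (use True assms in auto)
next
  case False
  have "((\<lambda>\<epsilon>. a + \<epsilon> * b) \<longlongrightarrow> a + 0 * b) (at_right 0)" by (intro tendsto_intros)
  then have "eventually (\<lambda>\<epsilon>. 0 < a + \<epsilon> * b) (at_right 0)"
    using False assms by (intro order_tendstoD(1)) auto
  then show ?thesis by eventually_elim auto
qed

definition unit_shift :: "nat \<Rightarrow> nat \<Rightarrow> nat \<Rightarrow> real" where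
  "unit_shift i j k = of_bool (k = i) - of_bool (k = j)"

lemma sum_unit_shift:
  "finite A \<Longrightarrow> (\<Sum>k\<in>A. unit_shift i j k * f k) = of_bool (i \<in> A) * f i - of_bool (j \<in> A) * f j"
  by (simp add: unit_shift_def left_diff_distrib sum_subtractf of_bool_def if_distrib[of "\<lambda>x. x * _"]
      cong: if_cong)

context lp_setting
begin

definition admissible_dir :: "(nat \<Rightarrow> real) \<Rightarrow> (nat \<Rightarrow> real) \<Rightarrow> bool" where
  "admissible_dir z d \<longleftrightarrow> (\<forall>k>n. d k = 0) \<and> (\<Sum>k=1..n. d k) = 0 \<and>
     (\<forall>k\<in>{1..n}. (z k = 0 \<longrightarrow> 0 \<le> d k) \<and> (z k = 1 \<longrightarrow> d k \<le> 0) \<and>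
        (k \<le> r \<and> z k * E k = z 0 \<longrightarrow> d 0 \<le> d k * E k) \<and>
        (r < k \<and> z k * E k = z 0 \<longrightarrow> d k * E k \<le> d 0))"

lemma admissible_dir_step:
  assumes z: "z \<in> feasible_points" and d: "admissible_dir z d"
  shows "\<exists>\<epsilon>>0. (\<lambda>k. z k + \<epsilon> * d k) \<in> feasible_points"
proof -
  let ?y = "\<lambda>\<epsilon> k. z k + \<epsilon> * d k"
  have "eventually (\<lambda>\<epsilon>. 0 \<le> ?y \<epsilon> k \<and> ?y \<epsilon> k \<le> 1 \<and> (k \<le> r \<longrightarrow> ?y \<epsilon> 0 \<le> ?y \<epsilon> k * E k) \<and>
      (r < k \<longrightarrow> ?y \<epsilon> k * E k \<le> ?y \<epsilon> 0)) (at_right 0)" if k: "k \<in> {1..n}" for k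
  proof -
    have zk: "0 \<le> z k" "z k \<le> 1" "k \<le> r \<Longrightarrow> z 0 \<le> z k * E k" "r < k \<Longrightarrow> z k * E k \<le> z 0"
      using z k by (auto simp: feasible_points_iff)
    have dk: "z k = 0 \<Longrightarrow> 0 \<le> d k" "z k = 1 \<Longrightarrow> d k \<le> 0"
      "k \<le> r \<Longrightarrow> z k * E k = z 0 \<Longrightarrow> d 0 \<le> d k * E k" "r < k \<Longrightarrow> z k * E k = z 0 \<Longrightarrow> d k * E k \<le> d 0"
      using d k by (auto simp: admissible_dir_def)
    have "eventually (\<lambda>\<epsilon>. 0 \<le> z k + \<epsilon> * d k) (at_right 0)"
      "eventually (\<lambda>\<epsilon>. 0 \<le> (1 - z k) + \<epsilon> * (- d k)) (at_right 0)"
      "eventually (\<lambda>\<epsilon>. 0 \<le> (if k \<le> r then z k * E k - z 0 else 0) +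
         \<epsilon> * (if k \<le> r then d k * E k - d 0 else 0)) (at_right 0)"
      "eventually (\<lambda>\<epsilon>. 0 \<le> (if r < k then z 0 - z k * E k else 0) +
         \<epsilon> * (if r < k then d 0 - d k * E k else 0)) (at_right 0)"
      by (rule eventually_at_right_affine_nonneg; use zk dk in \<open>auto split: if_splits\<close>)+
    then show ?thesis by eventually_elim (auto simp: algebra_simps split: if_splits)
  qed
  then have "eventually (\<lambda>\<epsilon>. 0 < \<epsilon> \<and> (\<forall>k\<in>{1..n}. 0 \<le> ?y \<epsilon> k \<and> ?y \<epsilon> k \<le> 1 \<and>
      (k \<le> r \<longrightarrow> ?y \<epsilon> 0 \<le> ?y \<epsilon> k * E k) \<and> (r < k \<longrightarrow> ?y \<epsilon> k * E k \<le> ?y \<epsilon> 0))) (at_right 0)"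
    by (intro eventually_conj eventually_at_right_less eventually_ball_finite) auto
  then obtain \<epsilon> where "0 < \<epsilon>" and \<epsilon>: "\<forall>k\<in>{1..n}. 0 \<le> ?y \<epsilon> k \<and> ?y \<epsilon> k \<le> 1 \<and>
      (k \<le> r \<longrightarrow> ?y \<epsilon> 0 \<le> ?y \<epsilon> k * E k) \<and> (r < k \<longrightarrow> ?y \<epsilon> k * E k \<le> ?y \<epsilon> 0)"
    using eventually_happens'[OF trivial_limit_at_right_real] by blast
  have "(\<Sum>k=1..n. ?y \<epsilon> k) = real r"
    using z d by (simp add: feasible_points_iff admissible_dir_def sum.distrib sum_distrib_left[symmetric])
  then have "?y \<epsilon> \<in> feasible_points"
    using \<epsilon> z d by (auto simp: feasible_points_iff admissible_dir_def)
  with \<open>0 < \<epsilon>\<close> show ?thesis by blast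
qed

lemma objective_add_scaled:
  "objective E n r (\<lambda>k. z k + \<epsilon> * d k) = objective E n r z + \<epsilon> * objective E n r d"
  unfolding objective_def by (simp add: algebra_simps sum.distrib sum_distrib_left)

lemma upper_mass_add_scaled: "upper_mass (\<lambda>k. z k + \<epsilon> * d k) = upper_mass z + \<epsilon> * upper_mass d"
  unfolding upper_mass_def by (simp add: algebra_simps sum.distrib sum_distrib_left)

lemma lexopt_admissible_dir:
  assumes L: "lexopt z" and d: "admissible_dir z d"
  shows "objective E n r d \<le> 0" "objective E n r d = 0 \<Longrightarrow> upper_mass d \<le> 0"
    "objective E n r d = 0 \<Longrightarrow> upper_mass d = 0 \<Longrightarrow> 0 \<le> d 0"
proof -
  obtain \<epsilon> where \<epsilon>: "0 < \<epsilon>" and y: "(\<lambda>k. z k + \<epsilon> * d k) \<in> feasible_points"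
    using admissible_dir_step[OF _ d] L by (auto simp: lexopt_def)
  show "objective E n r d \<le> 0"
    using L y \<epsilon> by (auto simp: lexopt_def objective_add_scaled mult_le_0_iff)
  assume "objective E n r d = 0"
  then show "upper_mass d \<le> 0"
    using L y \<epsilon> by (auto simp: lexopt_def objective_add_scaled upper_mass_add_scaled mult_le_0_iff)
  assume "upper_mass d = 0"
  then show "0 \<le> d 0"
    using L y \<epsilon> \<open>objective E n r d = 0\<close>
    by (auto simp: lexopt_def objective_add_scaled upper_mass_add_scaled zero_le_mult_iff)
qed

lemma lexopt_admissible_dir_pair:
  assumes L: "lexopt z" and "admissible_dir z d" "admissible_dir z (\<lambda>k. - d k)"
  shows "objective E n r d = 0" "upper_mass d = 0"
proof -
  have neg: "objective E n r (\<lambda>k. - d k) = - objective E n r d" "upper_mass (\<lambda>k. - d k) = - upper_mass d"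
    unfolding objective_def upper_mass_def by (simp_all add: sum_negf)
  have "objective E n r d \<le> 0" "objective E n r (\<lambda>k. - d k) \<le> 0"
    using lexopt_admissible_dir(1)[OF L] assms(2,3) by blast+
  then show obj: "objective E n r d = 0" using neg by linarith
  have "upper_mass d \<le> 0" "upper_mass (\<lambda>k. - d k) \<le> 0"
    using lexopt_admissible_dir(2)[OF L assms(2)] lexopt_admissible_dir(2)[OF L assms(3)] obj neg by auto
  then show "upper_mass d = 0" using neg by linarith
qed

lemma lexopt_feasible:
  assumes "lexopt z"
  shows "\<And>k. 1 \<le> k \<Longrightarrow> k \<le> n \<Longrightarrow> 0 \<le> z k \<and> z k \<le> 1" "(\<Sum>k=1..n. z k) = real r"
    "\<And>j. 1 \<le> j \<Longrightarrow> j \<le> r \<Longrightarrow> z 0 \<le> z j * E j" "\<And>t. r < t \<Longrightarrow> t \<le> n \<Longrightarrow> z t * E t \<le> z 0"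
    "0 \<le> z 0"
  using assms feasible_points_level_bounds(1)[of z] r_less_n
  by (auto simp: lexopt_def feasible_points_iff)

lemma admissible_unit_shift:
  assumes "i \<in> {1..n}" "j \<in> {1..n}" "i \<noteq> j" "z i \<noteq> 1" "z j \<noteq> 0"
    and "j \<le> r \<Longrightarrow> z j * E j \<noteq> z 0" "r < i \<Longrightarrow> z i * E i \<noteq> z 0"
  shows "admissible_dir z (unit_shift i j)"
  using assms sum_unit_shift[of "{1..n}" i j "\<lambda>_. 1"] E_pos[of i] E_pos[of j]
  by (auto simp: admissible_dir_def unit_shift_def)

lemma objective_unit_shift:
  assumes "i \<in> {1..n}" "j \<in> {1..n}"
  shows "objective E n r (unit_shift i j) = (if i \<le> r then E i / 2 else E i) - (if j \<le> r then E j / 2 else E j)"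
proof -
  have "(\<Sum>k=1..n. unit_shift i j k * E k) = E i - E j"
    "(\<Sum>k=1..r. unit_shift i j k * E k) = of_bool (i \<le> r) * E i - of_bool (j \<le> r) * E j"
    using assms by (simp_all add: sum_unit_shift)
  then show ?thesis unfolding objective_def by (cases "i \<le> r"; cases "j \<le> r") (auto simp: field_simps)
qed

lemma upper_mass_unit_shift:
  assumes "i \<in> {1..n}" "j \<in> {1..n}"
  shows "upper_mass (unit_shift i j) = of_bool (r < i) - of_bool (r < j)"
  using assms sum_unit_shift[of "{r+1..n}" i j "\<lambda>_. 1"] by (simp add: upper_mass_def)

text \<open>Exchange arguments at a lexicographic optimum: moving a unit of mass towards a larger
  weight \<open>E\<close> must be blocked by a bound or an active level constraint.\<close>

lemma lexopt_upper_exchange: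
  assumes L: "lexopt z" and "r < t" "t < t'" "t' \<le> n" "0 < z t'"
  shows "z t = 1 \<or> z t * E t = z 0"
proof (rule ccontr)
  assume "\<not> (z t = 1 \<or> z t * E t = z 0)"
  then have "admissible_dir z (unit_shift t t')"
    using assms by (intro admissible_unit_shift) auto
  then have "objective E n r (unit_shift t t') \<le> 0" by (rule lexopt_admissible_dir(1)[OF L])
  moreover have "E t' < E t" using assms by (intro E_less) auto
  ultimately show False using assms by (simp add: objective_unit_shift)
qed

lemma lexopt_lower_exchange:
  assumes L: "lexopt z" and "1 \<le> j" "j < j'" "j' \<le> r" "z j < 1"
  shows "z j' * E j' = z 0"
proof (rule ccontr)
  assume nt: "z j' * E j' \<noteq> z 0"
  have "0 \<le> z 0" "z 0 \<le> z j' * E j'" using lexopt_feasible[OF L] assms by auto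
  then have "z j' \<noteq> 0" using nt by auto
  then have "admissible_dir z (unit_shift j j')"
    using assms nt r_less_n by (intro admissible_unit_shift) auto
  then have "objective E n r (unit_shift j j') \<le> 0" by (rule lexopt_admissible_dir(1)[OF L])
  moreover have "E j' < E j" using assms r_less_n by (intro E_less) auto
  ultimately show False using assms r_less_n by (simp add: objective_unit_shift)
qed

lemma lexopt_no_double_slack:
  assumes L: "lexopt z" and j: "1 \<le> j" "j \<le> r" "z j < 1" "z 0 < z j * E j"
    and t: "r < t" "t \<le> n" "0 < z t" "z t < 1" "z t * E t < z 0"
  shows False
proof -
  have "z j \<noteq> 0" using j lexopt_feasible(5)[OF L] by auto
  then have "admissible_dir z (unit_shift t j)" "admissible_dir z (unit_shift j t)"
    using j t by (auto intro!: admissible_unit_shift)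
  moreover have "unit_shift j t = (\<lambda>k. - unit_shift t j k)" by (auto simp: unit_shift_def)
  ultimately have "upper_mass (unit_shift t j) = 0"
    using lexopt_admissible_dir_pair(2)[OF L] by auto
  then show False using j t by (simp add: upper_mass_unit_shift)
qed

lemma lexopt_upper_tight_exists:
  assumes L: "lexopt z"
  shows "\<exists>t. r < t \<and> t \<le> n \<and> z t * E t = z 0"
proof (rule ccontr)
  assume "\<not> ?thesis"
  then have "admissible_dir z (\<lambda>k. - of_bool (k = 0))"
    by (auto simp: admissible_dir_def)
  moreover have "objective E n r (\<lambda>k. - of_bool (k = 0)) = 0" "upper_mass (\<lambda>k. - of_bool (k = 0)) = 0"
    by (simp_all add: objective_def upper_mass_def)
  ultimately show False using lexopt_admissible_dir(3)[OF L] by fastforce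
qed

text \<open>Raising the level \<open>z 0\<close> by \<open>1\<close> keeps the coordinates \<open>lo..b\<close> tight if each of them
  grows by \<open>1 / E k\<close>; the coordinate \<open>q\<close> pays for the added mass.\<close>

definition level_shift_dir :: "nat \<Rightarrow> nat \<Rightarrow> nat \<Rightarrow> nat \<Rightarrow> real" where
  "level_shift_dir lo b q k =
     of_bool (k = 0) + (if lo \<le> k \<and> k \<le> b then 1 / E k else 0) - (if k = q then S E lo b else 0)"

lemma level_shift_dir_sums:
  assumes "1 \<le> lo" "b \<le> n" "1 \<le> q" "q \<le> n"
  shows "(\<Sum>k=1..n. level_shift_dir lo b q k) = 0"
    "upper_mass (level_shift_dir lo b q) = S E (max (r+1) lo) b - (if r < q then S E lo b else 0)"
  using assms sum_restrict_ivl[of lo b "\<lambda>k. 1 / E k"]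
  by (simp_all add: level_shift_dir_def upper_mass_def sum.distrib sum_subtractf sum_restrict_ivl
      S_eq max_def min_def)

lemma admissible_level_shift_dir:
  assumes "0 < z 0" "1 \<le> lo" "b \<le> n"
    and block: "\<And>k. lo \<le> k \<Longrightarrow> k \<le> b \<Longrightarrow> z k * E k = z 0 \<and> z k < 1"
    and q: "1 \<le> q" "q \<le> n" "q < lo \<or> b < q" "0 < z q" "z q < 1" "z q * E q \<noteq> z 0"
    and others: "\<And>k. 1 \<le> k \<Longrightarrow> k \<le> n \<Longrightarrow> z k * E k = z 0 \<Longrightarrow> lo \<le> k \<and> k \<le> b \<or> k = q"
    and s: "s = 1 \<or> s = -1"
  shows "admissible_dir z (\<lambda>k. s * level_shift_dir lo b q k)"
proof -
  have d: "level_shift_dir lo b q k = (if lo \<le> k \<and> k \<le> b then 1 / E k else if k = q then - S E lo b else 0)"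
    if "1 \<le> k" for k
    using that q by (auto simp: level_shift_dir_def)
  have d0: "level_shift_dir lo b q 0 = 1" using q assms(2) by (simp add: level_shift_dir_def)
  have "(z k = 0 \<longrightarrow> 0 \<le> s * level_shift_dir lo b q k) \<and> (z k = 1 \<longrightarrow> s * level_shift_dir lo b q k \<le> 0) \<and>
      (k \<le> r \<and> z k * E k = z 0 \<longrightarrow> s * level_shift_dir lo b q 0 \<le> s * level_shift_dir lo b q k * E k) \<and>
      (r < k \<and> z k * E k = z 0 \<longrightarrow> s * level_shift_dir lo b q k * E k \<le> s * level_shift_dir lo b q 0)"
    if k: "k \<in> {1..n}" for k
  proof -
    consider (block) "lo \<le> k" "k \<le> b" | (q) "k = q" | (other) "\<not> (lo \<le> k \<and> k \<le> b)" "k \<noteq> q"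
      by blast
    then show ?thesis
    proof cases
      case block
      then have "z k * E k = z 0" "z k < 1" "0 < E k" using assms k by (auto intro: E_pos)
      then show ?thesis using block assms(1) d0 d[of k] k by auto
    next
      case q
      then show ?thesis using assms by auto
    next
      case other
      then show ?thesis using d[of k] k others[of k] by auto
    qed
  qed
  moreover have "level_shift_dir lo b q k = 0" if "n < k" for k
    using that d[of k] assms by auto
  ultimately show ?thesis
    using level_shift_dir_sums(1)[of lo b q] assms by (auto simp: admissible_dir_def sum_distrib_left[symmetric])
qed

lemma lexopt_level_shift:
  assumes L: "lexopt z" and "0 < z 0" "1 \<le> lo" "b \<le> n"
    and "\<And>k. lo \<le> k \<Longrightarrow> k \<le> b \<Longrightarrow> z k * E k = z 0 \<and> z k < 1"
    and "1 \<le> q" "q \<le> n" "q < lo \<or> b < q" "0 < z q" "z q < 1" "z q * E q \<noteq> z 0"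
    and "\<And>k. 1 \<le> k \<Longrightarrow> k \<le> n \<Longrightarrow> z k * E k = z 0 \<Longrightarrow> lo \<le> k \<and> k \<le> b \<or> k = q"
  shows "S E (max (r+1) lo) b = (if r < q then S E lo b else 0)"
proof -
  have "admissible_dir z (\<lambda>k. s * level_shift_dir lo b q k)" if "s = 1 \<or> s = -1" for s
    using assms(2-) that by (rule admissible_level_shift_dir)
  then have "upper_mass (level_shift_dir lo b q) = 0"
    using lexopt_admissible_dir_pair(2)[OF L, of "level_shift_dir lo b q"] by fastforce
  then show ?thesis using assms by (simp add: level_shift_dir_sums(2))
qed

section \<open>Structure of a lexicographic optimum\<close>

lemma lexopt_last_positive:
  assumes "\<exists>t. r < t \<and> t \<le> n \<and> 0 < z t" and L: "lexopt z"
  obtains c where "r < c" "c \<le> n" "0 < z c" "\<And>t. c < t \<Longrightarrow> t \<le> n \<Longrightarrow> z t = 0"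
proof -
  define C where "C = {t\<in>{r<..n}. 0 < z t}"
  have fin: "finite C" and ne: "C \<noteq> {}" using assms by (auto simp: C_def)
  have cC: "Max C \<in> C" using fin ne by (rule Max_in)
  have cmax: "t \<le> Max C" if "t \<in> C" for t using fin that by (rule Max_ge)
  show ?thesis
  proof (rule that)
    show "r < Max C" "Max C \<le> n" "0 < z (Max C)" using cC by (auto simp: C_def)
    show "z t = 0" if "Max C < t" "t \<le> n" for t
    proof -
      have "r < t" using cC that by (simp add: C_def)
      moreover have "t \<notin> C" using cmax that by force
      ultimately show ?thesis using that lexopt_feasible(1)[OF L, of t] by (auto simp: C_def)
    qed
  qed
qed

lemma lexopt_first_deficit:
  assumes L: "lexopt z" and "r < c" "c \<le> n" "0 < z c"
  obtains \<alpha> where "1 \<le> \<alpha>" "\<alpha> \<le> r" "z \<alpha> < 1" "\<And>j. 1 \<le> j \<Longrightarrow> j < \<alpha> \<Longrightarrow> z j = 1"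
    "\<And>j. \<alpha> < j \<Longrightarrow> j \<le> r \<Longrightarrow> z j * E j = z 0"
proof -
  define A where "A = {j\<in>{1..r}. z j < 1}"
  have "(\<Sum>k=1..n. z k) = (\<Sum>k=1..r. z k) + (\<Sum>k=r+1..n. z k)"
    using r_less_n sum_split_ivl[of 1 r n z] by simp
  moreover have "z c \<le> (\<Sum>k=r+1..n. z k)"
    using assms lexopt_feasible(1)[OF L] by (intro member_le_sum) auto
  ultimately have "(\<Sum>k=1..r. z k) < (\<Sum>k=1..r. 1)"
    using assms lexopt_feasible(2)[OF L] by simp
  moreover have "(\<Sum>k=1..r. 1) \<le> (\<Sum>k=1..r. z k)" if "A = {}"
    using that r_less_n by (intro sum_mono) (auto simp: A_def not_less)
  ultimately have "A \<noteq> {}" by linarith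
  moreover have fin: "finite A" by (simp add: A_def)
  ultimately have aA: "Min A \<in> A" using Min_in by blast
  have amin: "Min A \<le> j" if "j \<in> A" for j using fin that by (rule Min_le)
  show ?thesis
  proof (rule that)
    show "1 \<le> Min A" "Min A \<le> r" "z (Min A) < 1" using aA by (auto simp: A_def)
    show "z j = 1" if "1 \<le> j" "j < Min A" for j
    proof -
      have "j \<notin> A" using amin that by force
      moreover have "j \<le> r" using aA that by (simp add: A_def)
      ultimately show ?thesis using that lexopt_feasible(1)[OF L, of j] r_less_n by (auto simp: A_def)
    qed
    show "z j * E j = z 0" if "Min A < j" "j \<le> r" for j
      using aA that by (intro lexopt_lower_exchange[OF L, of "Min A"]) (auto simp: A_def)
  qed
qed

lemma lexopt_last_tight:
  assumes L: "lexopt z"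
  obtains b where "r < b" "b \<le> n" "z b * E b = z 0"
    "\<And>t. r < t \<Longrightarrow> t \<le> n \<Longrightarrow> z t * E t = z 0 \<Longrightarrow> t \<le> b"
proof -
  define T where "T = {t\<in>{r<..n}. z t * E t = z 0}"
  have fin: "finite T" and ne: "T \<noteq> {}" using lexopt_upper_tight_exists[OF L] by (auto simp: T_def)
  have bT: "Max T \<in> T" using fin ne by (rule Max_in)
  show ?thesis
  proof (rule that)
    show "r < Max T" "Max T \<le> n" "z (Max T) * E (Max T) = z 0" using bT by (auto simp: T_def)
    show "t \<le> Max T" if "r < t" "t \<le> n" "z t * E t = z 0" for t
      using fin by (rule Max_ge) (use that in \<open>simp add: T_def\<close>)
  qed
qed

end

locale lexopt_profile = lp_setting +
  fixes z :: "nat \<Rightarrow> real" and \<alpha> b c :: nat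
  assumes lexopt: "lexopt z"
    and last_positive: "r < c" "c \<le> n" "0 < z c" "\<And>t. c < t \<Longrightarrow> t \<le> n \<Longrightarrow> z t = 0"
    and first_deficit: "1 \<le> \<alpha>" "\<alpha> \<le> r" "z \<alpha> < 1" "\<And>j. 1 \<le> j \<Longrightarrow> j < \<alpha> \<Longrightarrow> z j = 1"
      "\<And>j. \<alpha> < j \<Longrightarrow> j \<le> r \<Longrightarrow> z j * E j = z 0"
    and last_tight: "r < b" "b \<le> n" "z b * E b = z 0"
      "\<And>t. r < t \<Longrightarrow> t \<le> n \<Longrightarrow> z t * E t = z 0 \<Longrightarrow> t \<le> b"
begin

lemmas feasible = lexopt_feasible[OF lexopt]

lemma level_pos: "0 < z 0"
proof -
  have "0 < z c * E c" using last_positive E_pos[of c] by simp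
  also have "\<dots> \<le> z 0" using feasible(4) last_positive by simp
  finally show ?thesis .
qed

lemma level_le_E_b: "z 0 \<le> E b"
proof -
  have "z b * E b \<le> 1 * E b"
    using feasible(1)[of b] last_tight E_pos[of b] by (intro mult_right_mono) auto
  then show ?thesis using last_tight by simp
qed

lemma b_le_c: "b \<le> c"
proof (rule ccontr)
  assume "\<not> b \<le> c"
  then have "z b = 0" using last_positive last_tight by simp
  then show False using last_tight level_pos by simp
qed

lemma upper_tight: "r < t \<Longrightarrow> t \<le> b \<Longrightarrow> z t * E t = z 0"
proof (cases "t = b")
  case False
  assume t: "r < t" "t \<le> b"
  then have "z t = 1 \<or> z t * E t = z 0"
    using False b_le_c last_positive by (intro lexopt_upper_exchange[OF lexopt, of t c]) auto
  moreover have "z t = 1 \<Longrightarrow> z 0 \<le> z t * E t"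
    using t E_le[of t b] last_tight level_le_E_b by auto
  ultimately show ?thesis using feasible(4)[of t] t last_tight by fastforce
qed (use last_tight in simp)

lemma full_after_b:
  assumes "b < t" "t \<le> c" "t = c \<Longrightarrow> z c = 1 \<or> z c * E c = z 0"
  shows "z t = 1" "E t < z 0"
proof -
  have not_tight: "z t * E t \<noteq> z 0" using assms last_positive last_tight(1) last_tight(4)[of t] by auto
  have "z t = 1 \<or> z t * E t = z 0"
  proof (cases "t = c")
    case False
    then show ?thesis using assms last_positive last_tight
      by (intro lexopt_upper_exchange[OF lexopt, of t c]) auto
  qed (use assms in simp)
  then show "z t = 1" using not_tight by simp
  then show "E t < z 0"
    using not_tight feasible(4)[of t] assms last_tight last_positive by fastforce
qed

lemma level_block: "\<alpha> < k \<Longrightarrow> k \<le> b \<Longrightarrow> z k * E k = z 0"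
  using first_deficit(5) upper_tight by (cases "k \<le> r") auto

lemma tight_below_E_b_fractional:
  assumes "z 0 < E b" "\<alpha> \<le> k" "k \<le> b" "z k * E k = z 0"
  shows "z k < 1"
proof -
  have Ek: "0 < E k" using assms first_deficit last_tight by (intro E_pos) auto
  have "z k * E k < 1 * E k" using assms E_le[of k b] last_tight first_deficit by auto
  then show "z k < 1" using mult_less_cancel_right_pos[OF Ek] by blast
qed

lemma tight_below_E_b_within_block:
  assumes "z 0 < E b" "1 \<le> k" "k \<le> n" "z k * E k = z 0"
  shows "\<alpha> \<le> k \<and> k \<le> b"
proof (cases "k < \<alpha>")
  case True
  then have "E b < E k" using assms first_deficit last_tight by (intro E_less) auto
  then show ?thesis using True assms first_deficit(4)[of k] by simp
next
  case False
  have "k \<le> b"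
  proof (cases "k \<le> r")
    case False
    then show ?thesis using assms last_tight(4)[of k] by simp
  qed (use last_tight(1) in simp)
  with False show ?thesis by simp
qed

text \<open>Below \<open>E b\<close>, the tight coordinates form the fractional block \<open>\<alpha>..b\<close> (or \<open>\<alpha>+1..b\<close>);
  one further fractional, non-tight coordinate would then admit a two-sided level shift that
  changes the upper mass.\<close>

lemma level_eq_E_b_of_slack:
  assumes slack: "z 0 < z \<alpha> * E \<alpha>"
  shows "z 0 = E b"
proof (rule ccontr)
  assume "z 0 \<noteq> E b"
  then have below: "z 0 < E b" using level_le_E_b by simp
  have "0 < z \<alpha> * E \<alpha>" "0 < E \<alpha>"
    using slack level_pos E_pos[of \<alpha>] first_deficit r_less_n by auto
  then have "0 < z \<alpha>" by (rule zero_less_mult_pos2)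
  have "S E (max (r+1) (\<alpha>+1)) b = (if r < \<alpha> then S E (\<alpha>+1) b else 0)"
  proof (rule lexopt_level_shift[OF lexopt level_pos])
    show "z k * E k = z 0 \<and> z k < 1" if "\<alpha> + 1 \<le> k" "k \<le> b" for k
      using that level_block[of k] tight_below_E_b_fractional[OF below, of k] by simp
    show "\<alpha> + 1 \<le> k \<and> k \<le> b \<or> k = \<alpha>" if "1 \<le> k" "k \<le> n" "z k * E k = z 0" for k
      using tight_below_E_b_within_block[OF below that] by auto
  qed (use slack \<open>0 < z \<alpha>\<close> first_deficit(1-3) last_tight(2) r_less_n in auto)
  then have "S E (max (r+1) (\<alpha>+1)) b = 0" using first_deficit by simp
  moreover have "0 < S E (r+1) b" using last_tight by (intro S_pos) auto
  ultimately show False using first_deficit by (cases "r = \<alpha>") (auto simp: max_def)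
qed

lemma level_eq_E_b_of_fractional_c:
  assumes tight: "z \<alpha> * E \<alpha> = z 0" and frac: "z c < 1" "z c * E c < z 0"
  shows "z 0 = E b"
proof (rule ccontr)
  assume "z 0 \<noteq> E b"
  then have below: "z 0 < E b" using level_le_E_b by simp
  have "b < c" using b_le_c last_tight frac by (cases "b = c") auto
  have "S E (max (r+1) \<alpha>) b = (if r < c then S E \<alpha> b else 0)"
  proof (rule lexopt_level_shift[OF lexopt level_pos])
    show "z k * E k = z 0 \<and> z k < 1" if "\<alpha> \<le> k" "k \<le> b" for k
    proof -
      have "z k * E k = z 0" using that level_block tight by (cases "k = \<alpha>") auto
      then show ?thesis using tight_below_E_b_fractional[OF below that] by simp
    qed
    show "\<alpha> \<le> k \<and> k \<le> b \<or> k = c" if "1 \<le> k" "k \<le> n" "z k * E k = z 0" for k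
      using tight_below_E_b_within_block[OF below that] by auto
  qed (use frac \<open>b < c\<close> first_deficit(1) last_tight(2) last_positive(1-3) in auto)
  then have "S E (r+1) b = S E \<alpha> b" using first_deficit last_positive by (simp add: max_def)
  moreover have "S E \<alpha> b = S E \<alpha> r + S E (Suc r) b" using first_deficit last_tight by (intro S_split) auto
  moreover have "0 < S E \<alpha> r" using first_deficit r_less_n by (intro S_pos) auto
  ultimately show False by simp
qed

lemma level_values: "\<alpha> < k \<Longrightarrow> k \<le> b \<Longrightarrow> z k = z 0 / E k"
  using level_block E_pos[of k] first_deficit last_tight by (simp add: eq_divide_eq)

lemma level_values_of_tight_first_deficit:
  "z \<alpha> * E \<alpha> = z 0 \<Longrightarrow> \<alpha> \<le> k \<Longrightarrow> k \<le> b \<Longrightarrow> z k = z 0 / E k"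
  using level_values[of k] E_pos[of \<alpha>] first_deficit r_less_n by (cases "k = \<alpha>") (auto simp: eq_divide_eq)

lemma sum_split_profile:
  assumes "a \<le> b" "b \<le> c'" "c' \<le> c" "\<And>k. 1 \<le> k \<Longrightarrow> k \<le> a \<Longrightarrow> z k = 1"
    "\<And>k. b < k \<Longrightarrow> k \<le> c' \<Longrightarrow> z k = 1"
  shows "real a + (\<Sum>k=a+1..b. z k) + (real c' - real b) + (\<Sum>k=c'+1..c. z k) = real r"
proof -
  have "(\<Sum>k=c+1..n. z k) = 0" using last_positive(4) by simp
  moreover have "(\<Sum>k=c'+1..n. z k) = (\<Sum>k=c'+1..c. z k) + (\<Sum>k=c+1..n. z k)"
    using assms last_positive sum_split_ivl[of "c'+1" c n z] by simp
  ultimately show ?thesis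
    using sum_ones_block_ones[of a b c' n z] assms last_positive feasible(2) by simp
qed

text \<open>Four cases: the level constraint at \<open>\<alpha>\<close> is tight or slack, and the last positive
  coordinate \<open>c\<close> is full (\<open>z c = 1\<close> or tight) or fractional. A slack \<open>\<alpha>\<close> together with a
  fractional \<open>c\<close> is excluded by \<open>lexopt_no_double_slack\<close>.\<close>

lemma tight_full_good:
  assumes tight: "z \<alpha> * E \<alpha> = z 0" and full: "z c = 1 \<or> z c * E c = z 0"
  defines "a \<equiv> \<alpha> - 1"
  shows "z 0 * S E (a+1) b = real r - real a + real b - real c"
    "good E n r a b c" "b < c \<Longrightarrow> \<not> good E n r a (Suc b) c"
proof -
  have a: "a + 1 = \<alpha>" "a < r" using first_deficit by (auto simp: a_def)
  have level: "z k = z 0 / E k" if "a < k" "k \<le> b" for k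
    using level_values_of_tight_first_deficit[OF tight, of k] that a by simp
  have ones: "z k = 1" "E k < z 0" if "b < k" "k \<le> c" for k
    using full_after_b[OF that] full by auto
  have "real a + z 0 * S E (a+1) b + (real c - real b) = real r"
    using sum_split_profile[of a c] a b_le_c first_deficit(4) ones last_tight
    by (simp add: mult_S_eq_sum level)
  then show sum: "z 0 * S E (a+1) b = real r - real a + real b - real c" by simp
  have Sb: "0 < S E (a+1) b" using a last_tight by (intro S_pos) auto
  have "z 0 \<noteq> E b"
  proof
    assume "z 0 = E b"
    then have "E b * S E (a+1) b \<in> \<int>" using sum by simp
    then show False using S_non_integral a last_tight by auto
  qed
  then have "z 0 * S E (a+1) b < E b * S E (a+1) b"
    using level_le_E_b Sb by (intro mult_strict_right_mono) auto
  then show "good E n r a b c" using sum a last_tight last_positive b_le_c by (simp add: good_iff)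
  show "\<not> good E n r a (Suc b) c" if "b < c"
  proof -
    have "E (Suc b) * S E (a+1) (Suc b) = E (Suc b) * S E (a+1) b + 1"
      using that a last_tight last_positive E_pos[of "Suc b"] by (simp add: S_Suc_right field_simps)
    also have "\<dots> \<le> z 0 * S E (a+1) b + 1"
      using ones[of "Suc b"] that Sb by (intro add_mono mult_right_mono) auto
    finally show ?thesis using sum by (simp add: good_iff)
  qed
qed

lemma tight_full_is_p1:
  assumes "z \<alpha> * E \<alpha> = z 0" "z c = 1 \<or> z c * E c = z 0"
  shows "(\<alpha> - 1, c) \<in> X1 E n r" "\<forall>k\<in>{1..n}. z k = p1 E n r (\<alpha> - 1) c k"
proof -
  define a where "a = \<alpha> - 1"
  note good = tight_full_good[OF assms, folded a_def]
  have X: "(a, c) \<in> X1 E n r" and b: "b = min (hf E n r a c) c"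
    using X1_min_hfI[OF b_le_c good(2,3)] by auto
  then show "(\<alpha> - 1, c) \<in> X1 E n r" by (simp add: a_def)
  have "gamma1 E n r a c * S E (a+1) b = z 0 * S E (a+1) b"
    using gamma1_bounds(4)[OF X b] good(1) by simp
  moreover have "0 < S E (a+1) b" using first_deficit last_tight by (intro S_pos) (auto simp: a_def)
  ultimately have \<gamma>: "gamma1 E n r a c = z 0" by simp
  have "z k = p1 E n r a c k" if k: "1 \<le> k" "k \<le> n" for k
  proof -
    consider "k \<le> a" | "a < k" "k \<le> b" | "b < k" "k \<le> c" | "c < k" by linarith
    then show ?thesis
    proof cases
      case 1
      moreover have "k < \<alpha>" using 1 first_deficit(1) by (simp add: a_def)
      ultimately show ?thesis using k first_deficit(4)[of k] by (simp add: p1_eq[OF X b])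
    next
      case 2
      moreover have "z k = z 0 / E k"
        using 2 level_values_of_tight_first_deficit[OF assms(1), of k] by (simp add: a_def)
      ultimately show ?thesis by (simp add: p1_eq[OF X b] \<gamma>)
    next
      case 3
      then show ?thesis using full_after_b(1)[of k] assms(2) by (simp add: p1_eq[OF X b])
    next
      case 4
      moreover have "a < c" using first_deficit last_positive by (simp add: a_def)
      ultimately show ?thesis using k last_positive(4)[of k] b_le_c by (simp add: p1_eq[OF X b])
    qed
  qed
  then show "\<forall>k\<in>{1..n}. z k = p1 E n r (\<alpha> - 1) c k" by (simp add: a_def)
qed

lemma tight_fractional_good:
  assumes tight: "z \<alpha> * E \<alpha> = z 0" and frac: "z c < 1" "z c * E c < z 0"
  defines "a \<equiv> \<alpha> - 1"
  shows "b < c" "z c = real r - real a + real b - real c - E b * S E (a+1) (b-1)"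
    "good E n r a b c" "\<not> good E n r a b (c - 1)"
proof -
  show bc: "b < c" using b_le_c last_tight frac by (cases "b = c") auto
  have a: "a + 1 = \<alpha>" "a < r" using first_deficit by (auto simp: a_def)
  have level: "z 0 = E b" using tight frac by (rule level_eq_E_b_of_fractional_c)
  have "z k = E b / E k" if "a < k" "k \<le> b" for k
    using level_values_of_tight_first_deficit[OF tight, of k] that a level by simp
  moreover have "z k = 1" if "b < k" "k \<le> c - 1" for k using full_after_b(1)[of k] that by simp
  ultimately have "real a + E b * S E (a+1) b + (real (c - 1) - real b) + z c = real r"
    using sum_split_profile[of a "c - 1"] a bc first_deficit(4) last_tight
    by (simp add: mult_S_eq_sum)
  moreover have "E b * S E (a+1) b = E b * S E (a+1) (b-1) + 1"
    using a last_tight by (intro E_mult_S_last) auto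
  ultimately show zc: "z c = real r - real a + real b - real c - E b * S E (a+1) (b-1)"
    using bc by (simp add: of_nat_diff)
  show "good E n r a b c"
    using zc frac \<open>E b * S E (a+1) b = _\<close> a bc last_tight last_positive by (simp add: good_iff)
  show "\<not> good E n r a b (c - 1)"
    using zc last_positive \<open>E b * S E (a+1) b = _\<close> bc by (simp add: good_iff of_nat_diff)
qed

lemma tight_fractional_is_p2:
  assumes "z \<alpha> * E \<alpha> = z 0" "z c < 1" "z c * E c < z 0"
  shows "(\<alpha> - 1, b) \<in> X2 E n r" "\<forall>k\<in>{1..n}. z k = p2 E n r (\<alpha> - 1) b k"
proof -
  define a where "a = \<alpha> - 1"
  note good = tight_fractional_good[OF assms, folded a_def]
  have X: "(a, b) \<in> X2 E n r" and c: "ef E n r a b = c"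
    using X2_efI[OF good(1,3,4)] by auto
  then show "(\<alpha> - 1, b) \<in> X2 E n r" by (simp add: a_def)
  have level: "z 0 = E b" using assms by (rule level_eq_E_b_of_fractional_c)
  have a: "a < \<alpha>" "a < r" using first_deficit by (auto simp: a_def)
  have "z k = p2 E n r a b k" if k: "1 \<le> k" "k \<le> n" for k
  proof -
    consider "k \<le> a" | "a < k" "k \<le> b" | "b < k" "k < c" | "k = c" | "c < k" by linarith
    then show ?thesis
    proof cases
      case 1
      then show ?thesis using k a first_deficit(4)[of k] by (simp add: p2_def c)
    next
      case 2
      moreover have "z k = E b / E k"
        using 2 level level_values_of_tight_first_deficit[OF assms(1), of k] by (simp add: a_def)
      ultimately show ?thesis by (simp add: p2_def c)
    next
      case 3
      moreover have "k \<le> c - 1" using 3 by simp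
      ultimately show ?thesis using full_after_b(1)[of k] by (simp add: p2_def c)
    next
      case 4
      then show ?thesis using good(1,2) a last_positive(1) by (simp add: p2_def c)
    next
      case 5
      then show ?thesis using k a good(1) last_positive(1) last_positive(4)[of k] by (simp add: p2_def c)
    qed
  qed
  then show "\<forall>k\<in>{1..n}. z k = p2 E n r (\<alpha> - 1) b k" by (simp add: a_def)
qed

lemma slack_full_good:
  assumes slack: "z 0 < z \<alpha> * E \<alpha>" and full: "z c = 1 \<or> z c * E c = z 0"
  shows "\<alpha> < r" "z \<alpha> = real r - real \<alpha> + real b - real c - E b * S E (\<alpha>+1) (b-1)"
    "good E n r \<alpha> b c" "\<not> good E n r (\<alpha> - 1) b c"
proof -
  have level: "z 0 = E b" using slack by (rule level_eq_E_b_of_slack)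
  have "0 < z \<alpha> * E \<alpha>" "0 < E \<alpha>"
    using slack level_pos E_pos[of \<alpha>] first_deficit r_less_n by auto
  then have z\<alpha>: "0 < z \<alpha>" by (rule zero_less_mult_pos2)
  have ES: "E b * S E (\<alpha>+1) b = E b * S E (\<alpha>+1) (b-1) + 1"
    using first_deficit last_tight by (intro E_mult_S_last) auto
  have "(\<Sum>k=\<alpha>..b. z k) = z \<alpha> + E b * S E (\<alpha>+1) b"
    using first_deficit last_tight level level_values
    by (simp add: sum.atLeast_Suc_atMost mult_S_eq_sum)
  moreover have "z k = 1" if "b < k" "k \<le> c" for k using full_after_b(1)[of k] that full by auto
  ultimately have "real (\<alpha> - 1) + (z \<alpha> + E b * S E (\<alpha>+1) b) + (real c - real b) = real r"
    using sum_split_profile[of "\<alpha> - 1" c] first_deficit b_le_c last_tight by simp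
  then show z\<alpha>_eq: "z \<alpha> = real r - real \<alpha> + real b - real c - E b * S E (\<alpha>+1) (b-1)"
    using ES first_deficit by (simp add: of_nat_diff)
  show ar: "\<alpha> < r"
  proof (rule ccontr)
    assume "\<not> \<alpha> < r"
    then have "\<alpha> = r" using first_deficit by simp
    moreover have "0 \<le> E b * S E (\<alpha>+1) (b-1)"
      using last_tight E_pos[of b] S_nonneg[of "\<alpha>+1" "b-1"] by simp
    ultimately show False using z\<alpha>_eq z\<alpha> b_le_c by simp
  qed
  show "good E n r \<alpha> b c"
    using z\<alpha>_eq first_deficit ES ar last_tight last_positive by (simp add: good_iff)
  have "S E \<alpha> b = 1 / E \<alpha> + S E (\<alpha>+1) b"
    using first_deficit last_tight S_split[of \<alpha> \<alpha> b E] by (simp add: S_eq)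
  then have "E b * S E \<alpha> b = E b / E \<alpha> + E b * S E (\<alpha>+1) b" by (simp add: algebra_simps)
  moreover have "E b / E \<alpha> < z \<alpha>"
    using slack level E_pos[of \<alpha>] first_deficit r_less_n by (simp add: divide_less_eq)
  ultimately show "\<not> good E n r (\<alpha> - 1) b c"
    using z\<alpha>_eq ES first_deficit by (simp add: good_iff of_nat_diff)
qed

lemma slack_full_is_p3:
  assumes "z 0 < z \<alpha> * E \<alpha>" "z c = 1 \<or> z c * E c = z 0"
  shows "(b, c) \<in> X3 E n r" "\<forall>k\<in>{1..n}. z k = p3 E n r b c k"
proof -
  note good = slack_full_good[OF assms]
  have X: "(b, c) \<in> X3 E n r" and a: "gf E n r b c = \<alpha>"
    using X3_gfI[OF _ b_le_c good(3,4)] first_deficit by auto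
  then show "(b, c) \<in> X3 E n r" by simp
  have level: "z 0 = E b" using assms(1) by (rule level_eq_E_b_of_slack)
  have "z k = p3 E n r b c k" if k: "1 \<le> k" "k \<le> n" for k
  proof -
    consider "k < \<alpha>" | "k = \<alpha>" | "\<alpha> < k" "k \<le> b" | "b < k" "k \<le> c" | "c < k" by linarith
    then show ?thesis
    proof cases
      case 1
      then show ?thesis using k first_deficit(4)[of k] by (simp add: p3_def a)
    next
      case 2
      then show ?thesis using good(2) first_deficit by (simp add: p3_def a)
    next
      case 3
      moreover have "\<not> k \<le> \<alpha> - 1" using 3 by simp
      ultimately show ?thesis using level level_values[of k] by (simp add: p3_def a)
    next
      case 4
      then show ?thesis using full_after_b(1)[of k] assms(2) first_deficit last_tight
        by (simp add: p3_def a)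
    next
      case 5
      then show ?thesis using k good(1) b_le_c last_tight last_positive(4)[of k] by (simp add: p3_def a)
    qed
  qed
  then show "\<forall>k\<in>{1..n}. z k = p3 E n r b c k" by simp
qed

lemma exists_candidate_objective_ge:
  "\<exists>(p, \<gamma>)\<in>candidates E n r. objective E n r z \<le> objective E n r p"
proof -
  have "z 0 \<le> z \<alpha> * E \<alpha>" "z c * E c \<le> z 0" "z c \<le> 1" using feasible first_deficit last_positive by auto
  then consider "z \<alpha> * E \<alpha> = z 0" "z c = 1 \<or> z c * E c = z 0"
    | "z \<alpha> * E \<alpha> = z 0" "z c < 1" "z c * E c < z 0"
    | "z 0 < z \<alpha> * E \<alpha>" "z c = 1 \<or> z c * E c = z 0"
    | "z 0 < z \<alpha> * E \<alpha>" "z c < 1" "z c * E c < z 0"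
    by linarith
  then show ?thesis
  proof cases
    case 1
    show ?thesis
      using candidates_memI(2)[OF tight_full_is_p1(1)[OF 1]] tight_full_is_p1(2)[OF 1]
      by (rule candidate_dominates)
  next
    case 2
    show ?thesis
      using candidates_memI(3)[OF tight_fractional_is_p2(1)[OF 2]] tight_fractional_is_p2(2)[OF 2]
      by (rule candidate_dominates)
  next
    case 3
    show ?thesis
      using candidates_memI(4)[OF slack_full_is_p3(1)[OF 3]] slack_full_is_p3(2)[OF 3]
      by (rule candidate_dominates)
  next
    case 4
    then show ?thesis
      using lexopt_no_double_slack[OF lexopt, of \<alpha> c] first_deficit last_positive by simp
  qed
qed

end

context lp_setting
begin

lemma lexopt_profile_exists:
  assumes L: "lexopt z" and "\<exists>t. r < t \<and> t \<le> n \<and> 0 < z t"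
  obtains \<alpha> b c where "lexopt_profile E n r z \<alpha> b c"
proof -
  obtain c where c: "r < c" "c \<le> n" "0 < z c" "\<And>t. c < t \<Longrightarrow> t \<le> n \<Longrightarrow> z t = 0"
    using lexopt_last_positive[OF assms(2) L] by blast
  obtain \<alpha> where "1 \<le> \<alpha>" "\<alpha> \<le> r" "z \<alpha> < 1" "\<And>j. 1 \<le> j \<Longrightarrow> j < \<alpha> \<Longrightarrow> z j = 1"
    "\<And>j. \<alpha> < j \<Longrightarrow> j \<le> r \<Longrightarrow> z j * E j = z 0"
    using lexopt_first_deficit[OF L c(1-3)] by blast
  moreover obtain b where "r < b" "b \<le> n" "z b * E b = z 0"
    "\<And>t. r < t \<Longrightarrow> t \<le> n \<Longrightarrow> z t * E t = z 0 \<Longrightarrow> t \<le> b"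
    using lexopt_last_tight[OF L] by blast
  ultimately have "lexopt_profile E n r z \<alpha> b c"
    using L c lp_setting_axioms by (simp add: lexopt_profile_def lexopt_profile_axioms_def)
  then show ?thesis by (rule that)
qed

lemma lexopt_no_upper_mass_is_p0:
  assumes L: "lexopt z" and "\<not> (\<exists>t. r < t \<and> t \<le> n \<and> 0 < z t)" and k: "1 \<le> k" "k \<le> n"
  shows "z k = p0 n r k"
proof -
  have upper: "z t = 0" if "r < t" "t \<le> n" for t
    using assms(2) lexopt_feasible(1)[OF L, of t] that by force
  have "(\<Sum>k=1..n. z k) = (\<Sum>k=1..r. z k)"
    using sum_ones_block_ones[of r r r n z] sum_split_ivl[of 1 r n z] r_less_n upper by simp
  then have "(\<Sum>k=1..r. 1 - z k) = 0" using lexopt_feasible(2)[OF L] by (simp add: sum_subtractf)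
  moreover have "\<forall>k\<in>{1..r}. 0 \<le> 1 - z k" using lexopt_feasible(1)[OF L] r_less_n by auto
  ultimately have "\<forall>k\<in>{1..r}. z k = 1" using sum_nonneg_eq_0_iff[of "{1..r}" "\<lambda>k. 1 - z k"] by simp
  then show ?thesis using k upper by (auto simp: p0_def)
qed

lemma lexopt_le_candidate:
  assumes L: "lexopt z"
  shows "\<exists>(p, \<gamma>)\<in>candidates E n r. objective E n r z \<le> objective E n r p"
proof (cases "\<exists>t. r < t \<and> t \<le> n \<and> 0 < z t")
  case False
  have "\<forall>k\<in>{1..n}. z k = p0 n r k" using lexopt_no_upper_mass_is_p0[OF L False] by simp
  with candidates_memI(1) show ?thesis by (rule candidate_dominates)
next
  case True
  then obtain \<alpha> b c where "lexopt_profile E n r z \<alpha> b c" using lexopt_profile_exists[OF L] by blast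
  then show ?thesis by (rule lexopt_profile.exists_candidate_objective_ge)
qed

lemma candidate_optimal:
  assumes "(p, \<gamma>) \<in> candidates E n r"
    and max: "\<forall>(q, \<gamma>')\<in>candidates E n r. objective E n r q \<le> objective E n r p"
  shows "optimalP E n r p \<gamma>"
  unfolding optimalP_def
proof (intro conjI allI impI)
  show "feasibleP E n r p \<gamma>" using assms(1) by (rule candidate_feasible)
  fix q \<gamma>' assume "feasibleP E n r q \<gamma>'"
  then have "(\<lambda>k. if k = 0 then \<gamma>' else if k \<le> n then q k else 0) \<in> feasible_points"
    by (auto simp: feasible_points_iff feasibleP_iff)
  moreover obtain z where L: "lexopt z" using lexopt_exists by blast
  ultimately have "objective E n r q \<le> objective E n r z"
    using objective_cong[of q "\<lambda>k. if k = 0 then \<gamma>' else if k \<le> n then q k else 0"]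
    by (auto simp: lexopt_def)
  also have "\<dots> \<le> objective E n r p"
    using lexopt_le_candidate[OF L] max by fastforce
  finally show "objective E n r q \<le> objective E n r p" .
qed

end

theorem theorem4:
  fixes E :: "nat \<Rightarrow> real" and n r :: nat
  assumes "n \<ge> 2" and "0 < r" and "r < n"
    and A1: "\<forall>i j. 1 \<le> i \<longrightarrow> i < j \<longrightarrow> j \<le> n \<longrightarrow> E j < E i"
    and A1pos: "E n > 0"
    and A2: "\<forall>a\<in>{1..r}. \<forall>b\<in>{r+1..n}. E b * S E a b \<notin> \<int>"
  shows "(\<forall>(a,c)\<in>X1 E n r. inI n r (p1 E n r a c)) \<and>
         (\<forall>(a,b)\<in>X2 E n r. inI n r (p2 E n r a b)) \<and>
         (\<forall>(b,c)\<in>X3 E n r. inI n r (p3 E n r b c)) \<and>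
         feasibleP E n r (p0 n r) (gamma0 E r) \<and>
         (\<forall>(a,c)\<in>X1 E n r. feasibleP E n r (p1 E n r a c) (gamma1 E n r a c)) \<and>
         (\<forall>(a,b)\<in>X2 E n r. feasibleP E n r (p2 E n r a b) (gamma2 E n r a b)) \<and>
         (\<forall>(b,c)\<in>X3 E n r. feasibleP E n r (p3 E n r b c) (gamma3 E n r b c)) \<and>
         (\<forall>(p,\<gamma>)\<in>candidates E n r.
            (\<forall>(q,\<gamma>')\<in>candidates E n r. objective E n r q \<le> objective E n r p)
            \<longrightarrow> optimalP E n r p \<gamma>)"
proof -
  interpret lp_setting E n r using assms by unfold_locales auto
  have "feasibleP E n r p \<gamma> \<Longrightarrow> inI n r p" for p \<gamma> by (simp add: feasibleP_def)
  then show ?thesis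
    using p0_feasible p1_feasible p2_feasible p3_feasible candidate_optimal by blast
qed

end
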